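(* Let $X$ and $Y$ be uniformly locally finite metric spaces, and $\Phi:\mathrm{C}^*_u(X)\to\mathrm{C}^*_u(Y)$ an embedding such that $\Phi(\ell_\infty(X))\subset\ell_\infty(Y)$ and $\Phi(e_{xx})$ has rank $1$ for all $x\in X$. Let $Z\subset Y$ be the subset with $\chi_Z=\mathrm{SOT}\text{-}\sum_{x\in X}\Phi(e_{xx})$. If $\Phi(\mathrm{C}^*_u(X))$ is $\varepsilon$-almost cobounded in $\chi_Z\mathrm{C}^*_u(Y)\chi_Z$ for some $\varepsilon\in(0,1)$, then there is a bijective coarse quotient map $X\to Z$ (with $Z$ carrying the metric of $Y$).
   Context: $e_{xy}$ is the rank-one partial isometry on $\ell_2(X)$ with $e_{xy}\delta_x=\delta_y$ and $e_{xy}\delta_z=0$ for $z\ne x$; $\chi_A$ is the orthogonal projection onto $\ell_2(A)$. $\mathrm{C}^*_u(X)$: norm closure of finite-propagation operators, $\mathrm{propg}(a)=\sup\{d(x,y):\langle a\delta_x,\delta_y\rangle\ne0\}$; $\ell_\infty(X)$ diagonal subalgebra. Embedding = injective $*$-homomorphism. For $A_1\subset A_2\subset\mathrm{C}^*_u(Y)$, $A_1$ is $\varepsilon$-almost cobounded in $A_2$ if there is $k>0$ such that for all $b\in A_2$ there are $a_1,\dots,a_\ell\in A_1$ and $c_1,\dots,c_\ell\in A_2$ with $\mathrm{propg}(c_i)\le k$ and $\|b-\sum_{i=1}^\ell c_ia_i\|\le\varepsilon$. Coarse quotient: coarse map such that there is $K>0$ with: for every $\varepsilon>0$ there is $\delta>0$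 with $B(f(x),\varepsilon)\subset f(B(x,\delta))^K$ for all $x$ (closed balls, $A^K$ the closed $K$-neighborhood). *)

theory Defs
  imports "HOL-Analysis.Analysis"
begin

definition l2 :: "('a \<Rightarrow> complex) set" where
  "l2 = {f. (\<lambda>x. (cmod (f x))\<^sup>2) summable_on UNIV}"

definition l2norm :: "('a \<Rightarrow> complex) \<Rightarrow> real" where
  "l2norm f = sqrt (\<Sum>\<^sub>\<infinity>x. (cmod (f x))\<^sup>2)"

definition l2inner :: "('a \<Rightarrow> complex) \<Rightarrow> ('a \<Rightarrow> complex) \<Rightarrow> complex" where
  "l2inner f g = (\<Sum>\<^sub>\<infinity>x. f x * cnj (g x))"

type_synonym 'a op = "('a \<Rightarrow> complex) \<Rightarrow> ('a \<Rightarrow> complex)"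

definition op_add :: "'a op \<Rightarrow> 'a op \<Rightarrow> 'a op" where
  "op_add S T = (\<lambda>f x. S f x + T f x)"

definition op_diff :: "'a op \<Rightarrow> 'a op \<Rightarrow> 'a op" where
  "op_diff S T = (\<lambda>f x. S f x - T f x)"

definition op_scale :: "complex \<Rightarrow> 'a op \<Rightarrow> 'a op" where
  "op_scale c T = (\<lambda>f x. c * T f x)"

definition op_sum :: "('i \<Rightarrow> 'a op) \<Rightarrow> 'i set \<Rightarrow> 'a op" where
  "op_sum P I = (\<lambda>f x. \<Sum>i\<in>I. P i f x)"

text \<open>Bounded linear operators on ell_2(X); normalised to be 0 outside ell_2(X),
  so that sums, scalar multiples and composition of functions are the operator operations.\<close>

definition bop :: "'a op \<Rightarrow> bool" where
  "bop T \<longleftrightarrow> (\<forall>f. f \<notin> l2 \<longrightarrow> T f = (\<lambda>_. 0)) \<and> (\<forall>f\<in>l2. T f \<in> l2)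
     \<and> (\<forall>f\<in>l2. \<forall>g\<in>l2. \<forall>c. T (\<lambda>x. f x + c * g x) = (\<lambda>x. T f x + c * T g x))
     \<and> (\<exists>K. \<forall>f\<in>l2. l2norm (T f) \<le> K * l2norm f)"

definition op_norm :: "'a op \<Rightarrow> real" where
  "op_norm T = Sup ((\<lambda>f. l2norm (T f)) ` {f\<in>l2. l2norm f \<le> 1})"

definition adj :: "'a op \<Rightarrow> 'a op" where
  "adj T = (\<lambda>g. if g \<in> l2 then (THE h. h \<in> l2 \<and> (\<forall>f\<in>l2. l2inner (T f) g = l2inner f h)) else (\<lambda>_. 0))"

definition delta :: "'a \<Rightarrow> 'a \<Rightarrow> complex" where
  "delta x = (\<lambda>y. if y = x then 1 else 0)"

definition entry :: "'a op \<Rightarrow> 'a \<Rightarrow> 'a \<Rightarrow> complex" where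
  "entry T x y = T (delta x) y"

definition propg_le :: "('a::metric_space) op \<Rightarrow> real \<Rightarrow> bool" where
  "propg_le T k \<longleftrightarrow> (\<forall>x y. entry T x y \<noteq> 0 \<longrightarrow> dist x y \<le> k)"

definition uroe :: "('a::metric_space) op set" where
  "uroe = {T. bop T \<and> (\<forall>e>0. \<exists>S. bop S \<and> (\<exists>k. propg_le S k) \<and> op_norm (op_diff T S) < e)}"

definition mult_op :: "('a \<Rightarrow> complex) \<Rightarrow> 'a op" where
  "mult_op h = (\<lambda>f. if f \<in> l2 then (\<lambda>x. h x * f x) else (\<lambda>_. 0))"

definition linf :: "'a op set" where
  "linf = {mult_op h | h. bounded (range h)}"

definition chi :: "'a set \<Rightarrow> 'a op" where
  "chi A = mult_op (\<lambda>x. if x \<in> A then 1 else 0)"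

definition exy :: "'a \<Rightarrow> 'a \<Rightarrow> 'a op" where
  "exy x y = (\<lambda>f. if f \<in> l2 then (\<lambda>z. if z = y then f x else 0) else (\<lambda>_. 0))"

definition rank_one :: "'a op \<Rightarrow> bool" where
  "rank_one T \<longleftrightarrow> (\<exists>v. v \<noteq> (\<lambda>_. 0) \<and> T ` l2 = {(\<lambda>y. c * v y) | c. True})"

definition sot_sum :: "('i \<Rightarrow> 'a op) \<Rightarrow> 'a op \<Rightarrow> bool" where
  "sot_sum P T \<longleftrightarrow> (\<forall>f\<in>l2. \<forall>e>0. \<exists>F. finite F \<and>
      (\<forall>G. finite G \<and> F \<subseteq> G \<longrightarrow> l2norm (op_diff T (op_sum P G) f) < e))"

definition embedding :: "(('a::metric_space) op \<Rightarrow> ('b::metric_space) op) \<Rightarrow> bool" where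
  "embedding \<Phi> \<longleftrightarrow> \<Phi> ` uroe \<subseteq> uroe \<and> inj_on \<Phi> uroe
     \<and> (\<forall>S\<in>uroe. \<forall>T\<in>uroe. \<Phi> (op_add S T) = op_add (\<Phi> S) (\<Phi> T) \<and> \<Phi> (S \<circ> T) = \<Phi> S \<circ> \<Phi> T)
     \<and> (\<forall>T\<in>uroe. \<forall>c. \<Phi> (op_scale c T) = op_scale c (\<Phi> T))
     \<and> (\<forall>T\<in>uroe. \<Phi> (adj T) = adj (\<Phi> T))"

definition almost_cobounded :: "real \<Rightarrow> ('b::metric_space) op set \<Rightarrow> 'b op set \<Rightarrow> bool" where
  "almost_cobounded \<epsilon> A1 A2 \<longleftrightarrow> (\<exists>k>0. \<forall>b\<in>A2. \<exists>(l::nat) a c.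
      (\<forall>i<l. a i \<in> A1 \<and> c i \<in> A2 \<and> propg_le (c i) k)
      \<and> op_norm (op_diff b (op_sum (\<lambda>i. c i \<circ> a i) {..<l})) \<le> \<epsilon>)"

definition unif_locally_finite :: "'a::metric_space itself \<Rightarrow> bool" where
  "unif_locally_finite _ \<longleftrightarrow> (\<forall>r. \<exists>N::nat. \<forall>x::'a. finite (cball x r) \<and> card (cball x r) \<le> N)"

definition coarse_map :: "('a::metric_space \<Rightarrow> 'b::metric_space) \<Rightarrow> bool" where
  "coarse_map f \<longleftrightarrow> (\<forall>r. \<exists>s. \<forall>x x'. dist x x' \<le> r \<longrightarrow> dist (f x) (f x') \<le> s)"

definition coarse_quotient_on :: "('a::metric_space \<Rightarrow> 'b::metric_space) \<Rightarrow> 'b set \<Rightarrow> bool" where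
  "coarse_quotient_on f Z \<longleftrightarrow> f ` UNIV \<subseteq> Z \<and> coarse_map f \<and>
     (\<exists>K>0. \<forall>\<epsilon>>0. \<exists>\<delta>>0. \<forall>x.
        cball (f x) \<epsilon> \<inter> Z \<subseteq> {z\<in>Z. \<exists>w\<in>f ` cball x \<delta>. dist z w \<le> K})"

end

(* Phi maps the diagonal into the diagonal and each e_xx to a rank-one projection, so Phi(e_xx) is
   a diagonal matrix unit e_(phi x)(phi x); orthogonality makes phi injective and the SOT sum
   identifies Z with the range of phi.  Moreover T e_xx = |T delta_x><delta_x|, and Phi preserves the
   norm of such a column as well as the modulus of each of its entries, the entry at y going to phi y.
   Coarseness: the band operator of width r has entry 1 at (x, x') when d(x, x') <= r, so its image,
   being close to an operator of some propagation k, forces d(phi x, phi x') <= k.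
   Quotient property: approximate chi_Z band_r chi_Z within epsilon by a sum of c_i Phi(T_i) with
   propagation(c_i) <= k.  Approximating each T_i by an operator of propagation < delta shows that
   the sum has small entries at (phi x, z) whenever z is k-far from phi(B(x, delta)), whereas the band
   has entry 1 there for all z in Z within r of phi x; as epsilon < 1 there is no such z. *)

theory Submission
  imports Defs
begin

section \<open>The Hilbert space \<open>\<ell>\<^sub>2\<close>\<close>

lemma l2norm_nonneg: "0 \<le> l2norm f"
  by (simp add: l2norm_def infsum_nonneg)

lemma l2norm_sq: "(l2norm f)\<^sup>2 = (\<Sum>\<^sub>\<infinity>x. (cmod (f x))\<^sup>2)"
  unfolding l2norm_def by (simp add: infsum_nonneg)

lemma infsum_single_support:
  assumes "\<And>z. z \<noteq> y \<Longrightarrow> g z = (0::'b::{comm_monoid_add,t2_space})"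
  shows "infsum g UNIV = g y"
proof -
  have "infsum g UNIV = infsum g {y}"
    by (rule infsum_cong_neutral) (use assms in auto)
  thus ?thesis by simp
qed

lemma l2_finite_support:
  assumes "finite S" "\<And>x. x \<notin> S \<Longrightarrow> f x = 0"
  shows "f \<in> l2"
proof -
  have "(\<lambda>x. (cmod (f x))\<^sup>2) summable_on S" using assms by simp
  hence "(\<lambda>x. (cmod (f x))\<^sup>2) summable_on UNIV"
    by (rule summable_on_cong_neutral[THEN iffD1, rotated -1]) (use assms in auto)
  thus ?thesis by (simp add: l2_def)
qed

lemma l2_zero[simp]: "(\<lambda>_. 0) \<in> l2"
  by (rule l2_finite_support[of "{}"]) auto

lemma l2norm_zero[simp]: "l2norm (\<lambda>_. 0) = 0"
  by (simp add: l2norm_def)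

lemma l2norm_single:
  assumes "\<And>z. z \<noteq> y \<Longrightarrow> g z = 0"
  shows "l2norm g = cmod (g y)"
proof -
  have "(\<Sum>\<^sub>\<infinity>x. (cmod (g x))\<^sup>2) = (cmod (g y))\<^sup>2"
    by (rule infsum_single_support) (use assms in auto)
  thus ?thesis by (simp add: l2norm_def)
qed

lemma single_l2[simp]: "(\<lambda>z. if z = x then c else 0) \<in> l2"
  by (rule l2_finite_support[of "{x}"]) auto

lemma l2norm_single': "l2norm (\<lambda>z. if z = x then c else 0) = cmod c"
  by (subst l2norm_single[where y=x]) auto

lemma delta_l2[simp]: "delta x \<in> l2"
  by (rule l2_finite_support[of "{x}"]) (auto simp: delta_def)

lemma l2norm_delta[simp]: "l2norm (delta x) = 1"
  by (subst l2norm_single[where y=x]) (auto simp: delta_def)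

lemma norm_le_l2norm:
  assumes "f \<in> l2"
  shows "cmod (f x) \<le> l2norm f"
proof -
  have "sum (\<lambda>x. (cmod (f x))\<^sup>2) {x} \<le> (\<Sum>\<^sub>\<infinity>x. (cmod (f x))\<^sup>2)"
    by (rule finite_sum_le_infsum) (use assms in \<open>auto simp: l2_def\<close>)
  hence "(cmod (f x))\<^sup>2 \<le> (l2norm f)\<^sup>2" by (simp add: l2norm_sq)
  thus ?thesis using l2norm_nonneg by (meson abs_le_square_iff abs_norm_cancel dual_order.trans abs_ge_self power2_le_imp_le)
qed

lemma l2norm_eq0:
  assumes "f \<in> l2" "l2norm f = 0"
  shows "f = (\<lambda>_. 0)"
proof
  fix x show "f x = 0" using norm_le_l2norm[OF assms(1), of x] assms(2) by simp
qed

lemma l2_mono: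
  assumes "f \<in> l2" "\<And>x. cmod (g x) \<le> cmod (f x)"
  shows "g \<in> l2" "l2norm g \<le> l2norm f"
proof -
  have s: "(\<lambda>x. (cmod (f x))\<^sup>2) summable_on UNIV" using assms by (simp add: l2_def)
  have le: "(cmod (g x))\<^sup>2 \<le> (cmod (f x))\<^sup>2" for x using assms(2)[of x] by (simp add: power_mono)
  have sg: "(\<lambda>x. (cmod (g x))\<^sup>2) summable_on UNIV"
    by (rule summable_on_comparison_test[OF s]) (use le in auto)
  thus "g \<in> l2" by (simp add: l2_def)
  have "(\<Sum>\<^sub>\<infinity>x. (cmod (g x))\<^sup>2) \<le> (\<Sum>\<^sub>\<infinity>x. (cmod (f x))\<^sup>2)"
    by (rule infsum_mono[OF sg s]) (use le in auto)
  thus "l2norm g \<le> l2norm f" by (simp add: l2norm_def)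
qed

lemma l2_scale:
  assumes "f \<in> l2"
  shows "(\<lambda>x. c * f x) \<in> l2" "l2norm (\<lambda>x. c * f x) = cmod c * l2norm f"
proof -
  have e: "(\<lambda>x. (cmod (c * f x))\<^sup>2) = (\<lambda>x. (cmod c)\<^sup>2 * (cmod (f x))\<^sup>2)"
    by (simp add: norm_mult power_mult_distrib)
  have "(\<lambda>x. (cmod c)\<^sup>2 * (cmod (f x))\<^sup>2) summable_on UNIV"
    using assms by (intro summable_on_cmult_right) (simp add: l2_def)
  thus "(\<lambda>x. c * f x) \<in> l2" by (simp add: l2_def e)
  have "(\<Sum>\<^sub>\<infinity>x. (cmod (c * f x))\<^sup>2) = (cmod c)\<^sup>2 * (\<Sum>\<^sub>\<infinity>x. (cmod (f x))\<^sup>2)"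
    unfolding e by (rule infsum_cmult_right')
  thus "l2norm (\<lambda>x. c * f x) = cmod c * l2norm f"
    by (simp add: l2norm_def real_sqrt_mult)
qed

lemma sq_lincomb_bound:
  fixes a b c :: complex
  shows "(cmod (a + c * b))\<^sup>2 \<le> 2 * (cmod a)\<^sup>2 + 2 * ((cmod c)\<^sup>2 * (cmod b)\<^sup>2)"
proof -
  have t: "cmod (a + c * b) \<le> cmod a + cmod c * cmod b"
    by (metis norm_mult norm_triangle_ineq)
  have n: "0 \<le> cmod (a + c * b)" by simp
  have "(cmod (a + c * b))\<^sup>2 \<le> (cmod a + cmod c * cmod b)\<^sup>2"
    using power_mono[OF t n] .
  also have "\<dots> \<le> 2 * (cmod a)\<^sup>2 + 2 * (cmod c * cmod b)\<^sup>2"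
  proof -
    have "0 \<le> (cmod a - cmod c * cmod b)\<^sup>2" by simp
    thus ?thesis unfolding power2_sum power2_diff by linarith
  qed
  finally show ?thesis by (simp add: power_mult_distrib)
qed

lemma l2_lincomb:
  assumes "f \<in> l2" "g \<in> l2"
  shows "(\<lambda>x. f x + c * g x) \<in> l2"
    "l2norm (\<lambda>x. f x + c * g x) \<le> 2 * (l2norm f + cmod c * l2norm g)"
proof -
  have sf: "(\<lambda>x. (cmod (f x))\<^sup>2) summable_on UNIV" and sg: "(\<lambda>x. (cmod (g x))\<^sup>2) summable_on UNIV"
    using assms by (auto simp: l2_def)
  have sb: "(\<lambda>x. 2 * (cmod (f x))\<^sup>2 + 2 * ((cmod c)\<^sup>2 * (cmod (g x))\<^sup>2)) summable_on UNIV"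
    by (intro summable_on_add summable_on_cmult_right sf sg)
  have sh: "(\<lambda>x. (cmod (f x + c * g x))\<^sup>2) summable_on UNIV"
    by (rule summable_on_comparison_test[OF sb]) (auto simp: sq_lincomb_bound)
  thus "(\<lambda>x. f x + c * g x) \<in> l2" by (simp add: l2_def)
  have "(\<Sum>\<^sub>\<infinity>x. (cmod (f x + c * g x))\<^sup>2) \<le> (\<Sum>\<^sub>\<infinity>x. 2 * (cmod (f x))\<^sup>2 + 2 * ((cmod c)\<^sup>2 * (cmod (g x))\<^sup>2))"
    by (rule infsum_mono[OF sh sb]) (auto simp: sq_lincomb_bound)
  also have "\<dots> = 2 * (l2norm f)\<^sup>2 + 2 * ((cmod c)\<^sup>2 * (l2norm g)\<^sup>2)"
    by (simp add: infsum_add summable_on_cmult_right sf sg infsum_cmult_right' l2norm_sq)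
  also have "\<dots> \<le> (2 * (l2norm f + cmod c * l2norm g))\<^sup>2"
    using l2norm_nonneg[of f] l2norm_nonneg[of g]
    by (simp add: power2_eq_square algebra_simps)
  finally have "(l2norm (\<lambda>x. f x + c * g x))\<^sup>2 \<le> (2 * (l2norm f + cmod c * l2norm g))\<^sup>2"
    by (simp add: l2norm_sq)
  thus "l2norm (\<lambda>x. f x + c * g x) \<le> 2 * (l2norm f + cmod c * l2norm g)"
    by (rule power2_le_imp_le) (use l2norm_nonneg[of f] l2norm_nonneg[of g] in simp)
qed

lemma l2_tail:
  assumes "f \<in> l2" "\<eta> > 0"
  shows "\<exists>F. finite F \<and> l2norm (\<lambda>x. if x \<in> F then 0 else f x) < \<eta>"
proof -
  define g where "g x = (cmod (f x))\<^sup>2" for x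
  have sg: "g summable_on UNIV" using assms unfolding g_def by (simp add: l2_def)
  obtain F where F: "finite F" "dist (sum g F) (infsum g UNIV) \<le> \<eta>\<^sup>2/2"
    using infsum_finite_approximation[OF sg, of "\<eta>\<^sup>2/2"] assms by auto
  define t where "t x = (if x \<in> F then 0 else g x)" for x
  define h where "h x = (if x \<in> F then g x else 0)" for x
  have st: "t summable_on UNIV"
    by (rule summable_on_comparison_test[OF sg]) (auto simp: t_def g_def)
  have "g summable_on F" using F(1) by simp
  hence sh: "h summable_on UNIV"
    by (rule summable_on_cong_neutral[THEN iffD1, rotated -1]) (auto simp: h_def)
  have "infsum h UNIV = infsum g F" by (rule infsum_cong_neutral) (auto simp: h_def)
  hence ih: "infsum h UNIV = sum g F" using F(1) by simp
  have "infsum g UNIV = infsum (\<lambda>x. t x + h x) UNIV"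
    by (rule infsum_cong) (auto simp: t_def h_def)
  also have "\<dots> = infsum t UNIV + sum g F" by (simp add: infsum_add st sh ih)
  finally have "infsum t UNIV \<le> \<eta>\<^sup>2/2" using F(2) by (simp add: dist_real_def)
  moreover have "(l2norm (\<lambda>x. if x \<in> F then 0 else f x))\<^sup>2 = infsum t UNIV"
    unfolding l2norm_sq t_def g_def by (rule infsum_cong) simp
  moreover have "\<eta>\<^sup>2/2 < \<eta>\<^sup>2" using assms(2) by simp
  ultimately have "(l2norm (\<lambda>x. if x \<in> F then 0 else f x))\<^sup>2 < \<eta>\<^sup>2"
    by linarith
  hence "l2norm (\<lambda>x. if x \<in> F then 0 else f x) < \<eta>"
    using assms(2) by (simp add: power_less_imp_less_base l2norm_nonneg)
  thus ?thesis using F(1) by blast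
qed

lemma finite_support_expansion:
  assumes "finite S" "\<And>z. z \<notin> S \<Longrightarrow> g z = 0"
  shows "g = (\<lambda>z. \<Sum>y\<in>S. g y * delta y z)"
proof
  fix z
  have "(\<Sum>y\<in>S. g y * delta y z) = (\<Sum>y\<in>S. if y = z then g z else 0)"
    by (rule sum.cong) (auto simp: delta_def)
  also have "\<dots> = (if z \<in> S then g z else 0)" using assms(1) by simp
  also have "\<dots> = g z" using assms(2) by auto
  finally show "g z = (\<Sum>y\<in>S. g y * delta y z)" by simp
qed

lemma mult_le_weighted_squares:
  fixes a b t :: real
  assumes "t > 0"
  shows "a * b \<le> t/2 * a\<^sup>2 + (1/(2*t)) * b\<^sup>2"
proof -
  have "0 \<le> (t*a - b)\<^sup>2 / t" using assms by simp
  also have "(t*a - b)\<^sup>2 / t = t * a\<^sup>2 - 2*a*b + b\<^sup>2 / t"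
    using assms by (simp add: field_simps power2_eq_square)
  finally show ?thesis by (simp add: field_simps)
qed

lemma l2_prod_abs_summable:
  assumes "f \<in> l2" "g \<in> l2"
  shows "(\<lambda>x. norm (f x * cnj (g x))) summable_on UNIV"
proof -
  have sb: "(\<lambda>x. 1/2 * (cmod (f x))\<^sup>2 + (1/(2*1)) * (cmod (g x))\<^sup>2) summable_on UNIV"
    using assms by (intro summable_on_add summable_on_cmult_right) (auto simp: l2_def)
  show ?thesis
  proof (rule summable_on_comparison_test[OF sb])
    fix x
    show "norm (f x * cnj (g x)) \<le> 1/2 * (cmod (f x))\<^sup>2 + (1/(2*1)) * (cmod (g x))\<^sup>2"
      by (simp only: norm_mult complex_mod_cnj) (rule mult_le_weighted_squares, simp)
  qed simp
qed

lemma l2_prod_summable: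
  assumes "f \<in> l2" "g \<in> l2"
  shows "(\<lambda>x. f x * cnj (g x)) summable_on UNIV"
  by (rule abs_summable_summable) (rule l2_prod_abs_summable[OF assms])

lemma l2inner_Cauchy_Schwarz:
  assumes "f \<in> l2" "g \<in> l2"
  shows "cmod (l2inner f g) \<le> l2norm f * l2norm g"
proof (cases "l2norm f = 0 \<or> l2norm g = 0")
  case True
  then show ?thesis
    using l2norm_eq0[OF assms(1)] l2norm_eq0[OF assms(2)] by (auto simp: l2inner_def)
next
  case False
  hence pf: "l2norm f > 0" and pg: "l2norm g > 0" using l2norm_nonneg[of f] l2norm_nonneg[of g] by auto
  define t where "t = l2norm g / l2norm f"
  have t: "t > 0" using pf pg by (simp add: t_def)
  have sf: "(\<lambda>x. (cmod (f x))\<^sup>2) summable_on UNIV" and sg: "(\<lambda>x. (cmod (g x))\<^sup>2) summable_on UNIV"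
    using assms by (auto simp: l2_def)
  have sb: "(\<lambda>x. t/2 * (cmod (f x))\<^sup>2 + (1/(2*t)) * (cmod (g x))\<^sup>2) summable_on UNIV"
    by (intro summable_on_add summable_on_cmult_right sf sg)
  have "cmod (l2inner f g) \<le> (\<Sum>\<^sub>\<infinity>x. norm (f x * cnj (g x)))"
    unfolding l2inner_def by (rule norm_infsum_bound) (rule l2_prod_abs_summable[OF assms])
  also have "\<dots> \<le> (\<Sum>\<^sub>\<infinity>x. t/2 * (cmod (f x))\<^sup>2 + (1/(2*t)) * (cmod (g x))\<^sup>2)"
  proof (rule infsum_mono[OF l2_prod_abs_summable[OF assms] sb])
    fix x
    show "norm (f x * cnj (g x)) \<le> t/2 * (cmod (f x))\<^sup>2 + (1/(2*t)) * (cmod (g x))\<^sup>2"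
      by (simp only: norm_mult complex_mod_cnj) (rule mult_le_weighted_squares[OF t])
  qed
  also have "\<dots> = (\<Sum>\<^sub>\<infinity>x. t/2 * (cmod (f x))\<^sup>2) + (\<Sum>\<^sub>\<infinity>x. (1/(2*t)) * (cmod (g x))\<^sup>2)"
    by (rule infsum_add) (intro summable_on_cmult_right sf sg)+
  also have "\<dots> = t/2 * (l2norm f)\<^sup>2 + (1/(2*t)) * (l2norm g)\<^sup>2"
    by (simp only: infsum_cmult_right' l2norm_sq)
  also have "\<dots> = l2norm f * l2norm g"
    using pf pg by (simp add: t_def field_simps power2_eq_square)
  finally show ?thesis .
qed

lemma l2inner_scale_left: "l2inner (\<lambda>z. c * u z) g = c * l2inner u g"
  unfolding l2inner_def by (simp add: mult.assoc infsum_cmult_right')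

lemma l2inner_cnj: "cnj (l2inner u g) = l2inner g u"
proof -
  have "cnj (l2inner u g) = (\<Sum>\<^sub>\<infinity>x. cnj (u x * cnj (g x)))"
    unfolding l2inner_def by (rule infsum_cnj[symmetric])
  also have "\<dots> = l2inner g u" unfolding l2inner_def by (simp add: mult.commute)
  finally show ?thesis .
qed

lemma l2inner_delta_left: "l2inner (delta y) h = cnj (h y)"
  unfolding l2inner_def by (subst infsum_single_support[where y=y]) (auto simp: delta_def)

lemma l2inner_single_right: "l2inner f (\<lambda>z. if z = x then c else 0) = f x * cnj c"
  unfolding l2inner_def by (subst infsum_single_support[where y=x]) auto

lemma l2inner_self:
  assumes "u \<in> l2"
  shows "l2inner u u = complex_of_real ((l2norm u)\<^sup>2)"
proof -
  have s: "(\<lambda>x. (cmod (u x))\<^sup>2) summable_on UNIV" using assms by (simp add: l2_def)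
  have "l2inner u u = (\<Sum>\<^sub>\<infinity>x. complex_of_real ((cmod (u x))\<^sup>2))"
    unfolding l2inner_def by (rule infsum_cong) (metis complex_norm_square)
  also have "\<dots> = complex_of_real (\<Sum>\<^sub>\<infinity>x. (cmod (u x))\<^sup>2)"
    by (rule infsumI[OF has_sum_of_real[OF has_sum_infsum[OF s]]])
  finally show ?thesis by (simp add: l2norm_sq)
qed

lemma l2inner_add_right:
  assumes "f \<in> l2" "u \<in> l2" "w \<in> l2"
  shows "l2inner f (\<lambda>z. u z + w z) = l2inner f u + l2inner f w"
  unfolding l2inner_def
  by (simp add: distrib_left infsum_add l2_prod_summable[OF assms(1,2)] l2_prod_summable[OF assms(1,3)])

lemma l2inner_lin_left:
  assumes "f \<in> l2" "g \<in> l2" "u \<in> l2"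
  shows "l2inner (\<lambda>z. f z + c * g z) u = l2inner f u + c * l2inner g u"
proof -
  have "l2inner (\<lambda>z. f z + c * g z) u = (\<Sum>\<^sub>\<infinity>z. f z * cnj (u z) + c * (g z * cnj (u z)))"
    unfolding l2inner_def by (rule infsum_cong) (simp add: algebra_simps)
  also have "\<dots> = l2inner f u + (\<Sum>\<^sub>\<infinity>z. c * (g z * cnj (u z)))"
    unfolding l2inner_def
    by (rule infsum_add) (use l2_prod_summable[OF assms(1,3)] l2_prod_summable[OF assms(2,3)] in \<open>auto intro: summable_on_cmult_right\<close>)
  also have "\<dots> = l2inner f u + c * l2inner g u"
    unfolding l2inner_def by (simp only: infsum_cmult_right')
  finally show ?thesis .
qed

section \<open>Bounded operators\<close>

lemma bop_l2: "bop T \<Longrightarrow> f \<in> l2 \<Longrightarrow> T f \<in> l2"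
  by (simp add: bop_def)

lemma bop_out: "bop T \<Longrightarrow> f \<notin> l2 \<Longrightarrow> T f = (\<lambda>_. 0)"
  by (simp add: bop_def)

lemma bop_lin: "bop T \<Longrightarrow> f \<in> l2 \<Longrightarrow> g \<in> l2 \<Longrightarrow> T (\<lambda>x. f x + c * g x) = (\<lambda>x. T f x + c * T g x)"
  by (simp add: bop_def)

lemma bop_zero:
  assumes "bop T" shows "T (\<lambda>_. 0) = (\<lambda>_. 0)"
proof -
  have "T (\<lambda>x. (\<lambda>_. 0) x + 1 * (\<lambda>_. 0) x) = (\<lambda>x. T (\<lambda>_. 0) x + 1 * T (\<lambda>_. 0) x)"
    by (rule bop_lin[OF assms]) auto
  hence "T (\<lambda>_. 0) = (\<lambda>x. T (\<lambda>_. 0) x + T (\<lambda>_. 0) x)" by simp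
  thus ?thesis by (metis (no_types) add_cancel_right_right)
qed

lemma bop_scale:
  assumes "bop T" "f \<in> l2" shows "T (\<lambda>x. c * f x) = (\<lambda>x. c * T f x)"
  using bop_lin[OF assms(1) l2_zero assms(2), of c] bop_zero[OF assms(1)] by simp

lemma bop_add:
  assumes "bop T" "f \<in> l2" "g \<in> l2" shows "T (\<lambda>x. f x + g x) = (\<lambda>x. T f x + T g x)"
  using bop_lin[OF assms, of 1] by simp

lemma l2_sum:
  assumes "finite S" "\<And>y. y \<in> S \<Longrightarrow> g y \<in> l2"
  shows "(\<lambda>z. \<Sum>y\<in>S. a y * g y z) \<in> l2"
  using assms
proof (induction S rule: finite_induct)
  case empty then show ?case by simp
next
  case (insert y S)
  have "(\<lambda>z. (\<Sum>y\<in>S. a y * g y z) + a y * g y z) \<in> l2"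
    by (rule l2_lincomb(1)) (use insert in auto)
  thus ?case using insert by (simp add: add.commute)
qed

lemma bop_sum:
  assumes "bop T" "finite S" "\<And>y. y \<in> S \<Longrightarrow> g y \<in> l2"
  shows "T (\<lambda>z. \<Sum>y\<in>S. a y * g y z) = (\<lambda>z. \<Sum>y\<in>S. a y * T (g y) z)"
  using assms(2,3)
proof (induction S rule: finite_induct)
  case empty then show ?case using bop_zero[OF assms(1)] by simp
next
  case (insert y S)
  have l: "(\<lambda>z. \<Sum>y\<in>S. a y * g y z) \<in> l2" by (rule l2_sum) (use insert in auto)
  have "T (\<lambda>z. \<Sum>y\<in>insert y S. a y * g y z) = T (\<lambda>z. (\<Sum>y\<in>S. a y * g y z) + a y * g y z)"
    using insert by (simp add: add.commute)
  also have "\<dots> = (\<lambda>z. T (\<lambda>z. \<Sum>y\<in>S. a y * g y z) z + a y * T (g y) z)"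
    by (rule bop_lin[OF assms(1) l]) (use insert in auto)
  also have "\<dots> = (\<lambda>z. \<Sum>y\<in>insert y S. a y * T (g y) z)"
    using insert by (simp add: add.commute)
  finally show ?case .
qed

lemma bop_bound:
  assumes "bop T" shows "\<exists>K\<ge>0. \<forall>f\<in>l2. l2norm (T f) \<le> K * l2norm f"
proof -
  obtain K where K: "\<forall>f\<in>l2. l2norm (T f) \<le> K * l2norm f" using assms by (auto simp: bop_def)
  have "l2norm (T f) \<le> max K 0 * l2norm f" if "f \<in> l2" for f
    using K that by (meson max.cobounded1 mult_right_mono l2norm_nonneg order_trans)
  moreover have "0 \<le> max K 0" by simp
  ultimately show ?thesis by blast
qed

lemma op_norm_bdd:
  assumes "bop T" shows "bdd_above ((\<lambda>f. l2norm (T f)) ` {f\<in>l2. l2norm f \<le> 1})"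
proof -
  obtain K where K: "K \<ge> 0" "\<And>f. f \<in> l2 \<Longrightarrow> l2norm (T f) \<le> K * l2norm f" using bop_bound[OF assms] by auto
  have "l2norm (T f) \<le> K" if "f \<in> l2" "l2norm f \<le> 1" for f
    using K(2)[OF that(1)] mult_left_mono[OF that(2) K(1)] by simp
  thus ?thesis by (auto intro!: bdd_aboveI)
qed

lemma op_norm_upper:
  assumes "bop T" "f \<in> l2" "l2norm f \<le> 1" shows "l2norm (T f) \<le> op_norm T"
  unfolding op_norm_def by (rule cSup_upper[OF _ op_norm_bdd[OF assms(1)]]) (use assms in auto)

lemma op_norm_nonneg: "bop T \<Longrightarrow> 0 \<le> op_norm T"
  using op_norm_upper[of T "\<lambda>_. 0"] bop_zero[of T] by simp

lemma op_norm_le: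
  assumes "\<And>f. f \<in> l2 \<Longrightarrow> l2norm f \<le> 1 \<Longrightarrow> l2norm (T f) \<le> C"
  shows "op_norm T \<le> C"
  unfolding op_norm_def
proof (rule cSup_least)
  show "(\<lambda>f. l2norm (T f)) ` {f \<in> l2. l2norm f \<le> 1} \<noteq> {}"
    using l2_zero by (auto intro!: exI[of _ "\<lambda>_. 0"])
qed (use assms in auto)

lemma op_norm_bound:
  assumes "bop T" "f \<in> l2" shows "l2norm (T f) \<le> op_norm T * l2norm f"
proof (cases "l2norm f = 0")
  case True
  then show ?thesis using l2norm_eq0[OF assms(2)] bop_zero[OF assms(1)] by simp
next
  case False
  hence p: "l2norm f > 0" using l2norm_nonneg[of f] by simp
  define c where "c = complex_of_real (1 / l2norm f)"
  have g: "(\<lambda>x. c * f x) \<in> l2" using l2_scale[OF assms(2)] by blast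
  have ng: "l2norm (\<lambda>x. c * f x) = 1" using l2_scale(2)[OF assms(2), of c] p by (simp add: c_def norm_divide)
  have "l2norm (T (\<lambda>x. c * f x)) \<le> op_norm T" by (rule op_norm_upper[OF assms(1) g]) (simp add: ng)
  moreover have "l2norm (T (\<lambda>x. c * f x)) = l2norm (T f) / l2norm f"
  proof -
    have "T (\<lambda>x. c * f x) = (\<lambda>x. c * T f x)" by (rule bop_scale[OF assms])
    moreover have "l2norm (\<lambda>x. c * T f x) = cmod c * l2norm (T f)" by (rule l2_scale(2)[OF bop_l2[OF assms]])
    moreover have "cmod c = 1 / l2norm f" using p by (simp add: c_def norm_divide)
    ultimately show ?thesis by simp
  qed
  ultimately show ?thesis using p by (simp add: divide_le_eq)
qed

lemma norm_apply_le_op_norm: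
  assumes "bop T" "f \<in> l2" shows "cmod (T f z) \<le> op_norm T * l2norm f"
  using norm_le_l2norm[OF bop_l2[OF assms], of z] op_norm_bound[OF assms] by linarith

lemma bop_lincomb:
  assumes "bop S" "bop T" shows "bop (\<lambda>f x. S f x + c * T f x)"
proof -
  obtain K1 where K1: "K1 \<ge> 0" "\<And>f. f \<in> l2 \<Longrightarrow> l2norm (S f) \<le> K1 * l2norm f" using bop_bound[OF assms(1)] by auto
  obtain K2 where K2: "K2 \<ge> 0" "\<And>f. f \<in> l2 \<Longrightarrow> l2norm (T f) \<le> K2 * l2norm f" using bop_bound[OF assms(2)] by auto
  have b: "l2norm (\<lambda>x. S f x + c * T f x) \<le> (2 * (K1 + cmod c * K2)) * l2norm f" if "f \<in> l2" for f
  proof -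
    have "l2norm (\<lambda>x. S f x + c * T f x) \<le> 2 * (l2norm (S f) + cmod c * l2norm (T f))"
      by (rule l2_lincomb(2)) (use that assms in \<open>auto intro: bop_l2\<close>)
    also have "\<dots> \<le> 2 * (K1 * l2norm f + cmod c * (K2 * l2norm f))"
    proof -
      have "cmod c * l2norm (T f) \<le> cmod c * (K2 * l2norm f)"
        by (rule mult_left_mono) (use K2(2)[OF that] in auto)
      thus ?thesis using K1(2)[OF that] by (intro mult_left_mono) linarith+
    qed
    finally show ?thesis by (simp add: algebra_simps)
  qed
  show ?thesis
    unfolding bop_def
  proof (intro conjI allI ballI impI)
    fix f :: "'a \<Rightarrow> complex" assume "f \<notin> l2"
    thus "(\<lambda>x. S f x + c * T f x) = (\<lambda>_. 0)" using assms by (simp add: bop_out)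
  next
    fix f :: "'a \<Rightarrow> complex" assume "f \<in> l2"
    thus "(\<lambda>x. S f x + c * T f x) \<in> l2" using assms by (intro l2_lincomb(1)) (auto intro: bop_l2)
  next
    fix f g :: "'a \<Rightarrow> complex" and d assume "f \<in> l2" "g \<in> l2"
    thus "(\<lambda>x. S (\<lambda>x. f x + d * g x) x + c * T (\<lambda>x. f x + d * g x) x) =
          (\<lambda>x. (S f x + c * T f x) + d * (S g x + c * T g x))"
    proof -
      have 1: "S (\<lambda>x. f x + d * g x) = (\<lambda>x. S f x + d * S g x)" by (rule bop_lin) (use assms \<open>f \<in> l2\<close> \<open>g \<in> l2\<close> in auto)
      have 2: "T (\<lambda>x. f x + d * g x) = (\<lambda>x. T f x + d * T g x)" by (rule bop_lin) (use assms \<open>f \<in> l2\<close> \<open>g \<in> l2\<close> in auto)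
      show ?thesis unfolding 1 2 by (rule ext) (simp add: distrib_left add_ac mult_ac)
    qed
  next
    show "\<exists>K. \<forall>f\<in>l2. l2norm (\<lambda>x. S f x + c * T f x) \<le> K * l2norm f"
      by (rule exI[of _ "2 * (K1 + cmod c * K2)"]) (use b in auto)
  qed
qed

lemma bopI:
  assumes "\<And>f. f \<notin> l2 \<Longrightarrow> T f = (\<lambda>_. 0)" "\<And>f. f \<in> l2 \<Longrightarrow> T f \<in> l2"
    "\<And>f g c. f \<in> l2 \<Longrightarrow> g \<in> l2 \<Longrightarrow> T (\<lambda>x. f x + c * g x) = (\<lambda>x. T f x + c * T g x)"
    "\<And>f. f \<in> l2 \<Longrightarrow> l2norm (T f) \<le> K * l2norm f"
  shows "bop T"
  unfolding bop_def using assms by blast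

definition zero_op :: "'a op" where "zero_op = (\<lambda>f x. 0)"

lemma bop_zero_op: "bop zero_op"
  by (rule bopI[where K=0]) (auto simp: zero_op_def)

lemma op_norm_zero_op: "op_norm (zero_op :: 'a op) = 0"
proof -
  have "op_norm (zero_op :: 'a op) \<le> 0" by (rule op_norm_le) (simp add: zero_op_def)
  thus ?thesis using op_norm_nonneg[OF bop_zero_op, where 'a='a] by linarith
qed

lemma op_diff_self: "op_diff T T = zero_op"
  by (simp add: op_diff_def zero_op_def)

lemma bop_comp:
  assumes S: "bop S" and T: "bop T" shows "bop (S \<circ> T)"
proof -
  obtain K1 where K1: "K1 \<ge> 0" "\<And>f. f \<in> l2 \<Longrightarrow> l2norm (S f) \<le> K1 * l2norm f" using bop_bound[OF S] by auto
  obtain K2 where K2: "K2 \<ge> 0" "\<And>f. f \<in> l2 \<Longrightarrow> l2norm (T f) \<le> K2 * l2norm f" using bop_bound[OF T] by auto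
  show ?thesis
  proof (rule bopI[where K="K1 * K2"])
    fix f :: "'a \<Rightarrow> complex" assume "f \<notin> l2"
    thus "(S \<circ> T) f = (\<lambda>_. 0)" using bop_out[OF T] bop_zero[OF S] by simp
  next
    fix f :: "'a \<Rightarrow> complex" assume f: "f \<in> l2"
    have Tf: "T f \<in> l2" by (rule bop_l2[OF T f])
    show "(S \<circ> T) f \<in> l2" using bop_l2[OF S Tf] by simp
    have "l2norm (S (T f)) \<le> K1 * l2norm (T f)" by (rule K1(2)[OF Tf])
    also have "\<dots> \<le> K1 * (K2 * l2norm f)" by (rule mult_left_mono[OF K2(2)[OF f] K1(1)])
    finally show "l2norm ((S \<circ> T) f) \<le> K1 * K2 * l2norm f" by (simp add: mult.assoc)
  next
    fix f g :: "'a \<Rightarrow> complex" and c assume fg: "f \<in> l2" "g \<in> l2"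
    have "T (\<lambda>x. f x + c * g x) = (\<lambda>x. T f x + c * T g x)" by (rule bop_lin[OF T fg])
    moreover have "S (\<lambda>x. T f x + c * T g x) = (\<lambda>x. S (T f) x + c * S (T g) x)"
      by (rule bop_lin[OF S bop_l2[OF T fg(1)] bop_l2[OF T fg(2)]])
    ultimately show "(S \<circ> T) (\<lambda>x. f x + c * g x) = (\<lambda>x. (S \<circ> T) f x + c * (S \<circ> T) g x)" by simp
  qed
qed

lemma bop_op_diff:
  assumes "bop S" "bop T" shows "bop (op_diff S T)"
proof -
  have "op_diff S T = (\<lambda>f x. S f x + (-1) * T f x)" by (simp add: op_diff_def fun_eq_iff)
  thus ?thesis using bop_lincomb[OF assms, of "-1"] by simp
qed

lemma bop_op_sum:
  assumes "finite I" "\<And>i. i \<in> I \<Longrightarrow> bop (P i)" shows "bop (op_sum P I)"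
  using assms
proof (induction I rule: finite_induct)
  case empty
  have "op_sum P {} = zero_op" by (simp add: op_sum_def zero_op_def)
  then show ?case using bop_zero_op by simp
next
  case (insert i I)
  have "op_sum P (insert i I) = (\<lambda>f x. op_sum P I f x + 1 * P i f x)"
    using insert(1,2) by (simp add: op_sum_def fun_eq_iff add.commute)
  thus ?case using bop_lincomb[of "op_sum P I" "P i" 1] insert by simp
qed

section \<open>The uniform Roe algebra\<close>

lemma finite_propg_uroe:
  fixes T :: "('a::metric_space) op"
  assumes "bop T" "propg_le T k" shows "T \<in> uroe"
  unfolding uroe_def using assms by (auto simp: op_diff_self op_norm_zero_op)

lemma uroe_bop: "T \<in> uroe \<Longrightarrow> bop T"
  by (simp add: uroe_def)

lemma propg_zero_op: "propg_le zero_op 0"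
  by (simp add: propg_le_def entry_def zero_op_def)

lemma zero_op_uroe: "(zero_op :: ('a::metric_space) op) \<in> uroe"
  using finite_propg_uroe[OF bop_zero_op propg_zero_op] .

lemma uroe_approxE:
  assumes "T \<in> uroe" "e > 0"
  obtains S k where "bop S" "propg_le S k" "op_norm (op_diff T S) < e"
  using assms unfolding uroe_def by blast

lemma entry_nonzero_of_approx:
  assumes T: "bop T" and S: "bop S" and close: "op_norm (op_diff T S) < cmod (T (delta a) b)"
  shows "entry S a b \<noteq> 0"
proof
  assume "entry S a b = 0"
  hence "op_diff T S (delta a) b = T (delta a) b" by (simp add: op_diff_def entry_def)
  moreover have "cmod (op_diff T S (delta a) b) \<le> op_norm (op_diff T S)"
    using norm_apply_le_op_norm[OF bop_op_diff[OF T S] delta_l2] by simp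
  ultimately show False using close by simp
qed

lemma propg_apply_far_zero:
  assumes c: "bop c" "propg_le c k" and S: "finite S" "\<And>y. y \<notin> S \<Longrightarrow> g y = 0"
    and far: "\<And>s. s \<in> S \<Longrightarrow> k < dist s z"
  shows "c g z = 0"
proof -
  have g: "g = (\<lambda>t. \<Sum>s\<in>S. g s * delta s t)" by (rule finite_support_expansion[OF S])
  have "c g = (\<lambda>t. \<Sum>s\<in>S. g s * c (delta s) t)"
    by (subst g, rule bop_sum[OF c(1) S(1) delta_l2])
  moreover have "c (delta s) z = 0" if "s \<in> S" for s
    using c(2) far[OF that] by (force simp: propg_le_def entry_def)
  ultimately show ?thesis by simp
qed

lemma l2norm_outside_cball_le:
  assumes T: "bop T" and S: "bop S" "propg_le S k" and k: "k < \<delta>"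
  shows "l2norm (\<lambda>y. if y \<in> cball x \<delta> then 0 else T (delta x) y) \<le> op_norm (op_diff T S)"
proof -
  have D: "bop (op_diff T S)" by (rule bop_op_diff[OF T S(1)])
  have le: "cmod (if y \<in> cball x \<delta> then 0 else T (delta x) y) \<le> cmod (op_diff T S (delta x) y)" for y
  proof (cases "y \<in> cball x \<delta>")
    case False
    hence "entry S x y = 0" using S(2) k unfolding propg_le_def by force
    thus ?thesis using False by (simp add: entry_def op_diff_def)
  qed simp
  have "l2norm (\<lambda>y. if y \<in> cball x \<delta> then 0 else T (delta x) y) \<le> l2norm (op_diff T S (delta x))"
    by (rule l2_mono(2)[OF bop_l2[OF D delta_l2] le])
  also have "\<dots> \<le> op_norm (op_diff T S)" using op_norm_bound[OF D delta_l2] by simp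
  finally show ?thesis .
qed

lemma mult_op_apply: "f \<in> l2 \<Longrightarrow> mult_op h f = (\<lambda>x. h x * f x)"
  by (simp add: mult_op_def)

lemma bop_mult_op:
  assumes "bounded (range h)" shows "bop (mult_op h)"
proof -
  obtain B where B: "\<And>x. cmod (h x) \<le> B" using assms unfolding bounded_iff by auto
  have b: "(\<lambda>x. h x * f x) \<in> l2 \<and> l2norm (\<lambda>x. h x * f x) \<le> cmod (of_real B) * l2norm f" if "f \<in> l2" for f
  proof -
    have le: "cmod (h x * f x) \<le> cmod (of_real B * f x)" for x
      using B[of x] by (simp add: norm_mult mult_right_mono)
    show ?thesis using l2_mono[OF l2_scale(1)[OF that] le] l2_scale(2)[OF that] by simp
  qed
  show ?thesis
  proof (rule bopI[where K="cmod (of_real B)"])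
    fix f :: "'a \<Rightarrow> complex" assume f: "f \<in> l2"
    show "mult_op h f \<in> l2" "l2norm (mult_op h f) \<le> cmod (of_real B) * l2norm f"
      using b[OF f] f by (simp_all only: mult_op_apply)
  next
    fix f g :: "'a \<Rightarrow> complex" and c assume fg: "f \<in> l2" "g \<in> l2"
    have "(\<lambda>x. f x + c * g x) \<in> l2" by (rule l2_lincomb(1)[OF fg])
    thus "mult_op h (\<lambda>x. f x + c * g x) = (\<lambda>x. mult_op h f x + c * mult_op h g x)"
      using fg by (simp add: mult_op_def distrib_left mult.left_commute)
  qed (simp add: mult_op_def)
qed

lemma mult_op_delta: "mult_op h (delta y) y = h y"
  by (simp add: mult_op_def delta_def)

lemma propg_mult_op: "propg_le (mult_op h) 0"
  by (auto simp: propg_le_def entry_def mult_op_def delta_def)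

lemma mult_op_uroe: "bounded (range h) \<Longrightarrow> (mult_op h :: ('a::metric_space) op) \<in> uroe"
  using finite_propg_uroe[OF bop_mult_op propg_mult_op] .

lemma bounded_delta: "bounded (range (delta x))"
  by (rule finite_imp_bounded, rule finite_subset[of _ "{0,1}"]) (auto simp: delta_def)

lemma bounded_indicator: "bounded (range (\<lambda>x. if x \<in> A then (1::complex) else 0))"
  by (rule finite_imp_bounded, rule finite_subset[of _ "{0,1}"]) auto

lemma bop_mult_op_l2:
  assumes "bounded (range h)" "f \<in> l2" shows "(\<lambda>x. h x * f x) \<in> l2"
proof -
  have "mult_op h f \<in> l2" by (rule bop_l2[OF bop_mult_op[OF assms(1)] assms(2)])
  thus ?thesis by (simp only: mult_op_apply[OF assms(2)])
qed

lemma mult_op_comp: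
  assumes "bounded (range h')" shows "mult_op h \<circ> mult_op h' = mult_op (\<lambda>x. h x * h' x)"
  using bop_mult_op_l2[OF assms] by (auto simp: mult_op_def fun_eq_iff mult.assoc)

lemma mult_op_zero: "mult_op (\<lambda>_. 0) = zero_op"
  by (simp add: mult_op_def zero_op_def fun_eq_iff)

lemma exy_mult: "exy x x = mult_op (delta x)"
  by (auto simp: exy_def mult_op_def delta_def fun_eq_iff)

lemma exy_diag_uroe: "(exy x x :: ('a::metric_space) op) \<in> uroe"
  unfolding exy_mult by (rule mult_op_uroe[OF bounded_delta])

lemma exy_linf: "exy x x \<in> linf"
  unfolding linf_def exy_mult by (rule CollectI, rule exI[of _ "delta x"]) (simp add: bounded_delta)

lemma exy_idem: "exy y y \<circ> exy y y = exy y y"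
proof -
  have "(\<lambda>z. delta y z * delta y z) = delta y" by (auto simp: delta_def fun_eq_iff)
  thus ?thesis by (simp add: exy_mult mult_op_comp[OF bounded_delta])
qed

lemma exy_comp_ne: "x \<noteq> x' \<Longrightarrow> exy x x \<circ> exy x' x' = zero_op"
proof -
  assume "x \<noteq> x'"
  hence "(\<lambda>z. delta x z * delta x' z) = (\<lambda>_. 0)" by (auto simp: delta_def fun_eq_iff)
  thus ?thesis by (simp add: exy_mult mult_op_comp[OF bounded_delta] mult_op_zero)
qed

lemma exy_delta: "exy y y (delta y) = delta y"
  by (auto simp: exy_def delta_def fun_eq_iff)

lemma exy_ne_zero_op: "exy y y \<noteq> zero_op"
proof
  assume "exy y y = zero_op"
  hence "exy y y (delta y) y = zero_op (delta y) y" by simp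
  thus False by (simp only: exy_delta) (simp add: zero_op_def delta_def)
qed

lemma mult_op_idem_rank_one_eq_exy:
  assumes h: "bounded (range h)" and idem: "mult_op h \<circ> mult_op h = mult_op h"
    and rk: "rank_one (mult_op h)"
  shows "\<exists>y. mult_op h = exy y y"
proof -
  have hh: "h y * h y = h y" for y
    using arg_cong[OF idem[unfolded mult_op_comp[OF h]], where f="\<lambda>T. T (delta y) y"]
    by (simp add: mult_op_delta)
  obtain v where v: "v \<noteq> (\<lambda>_. 0)" "mult_op h ` l2 = {(\<lambda>y. c * v y) | c. True}"
    using rk unfolding rank_one_def by blast
  have in_img: "\<exists>c. (\<lambda>z. if z = y then h y else 0) = (\<lambda>z. c * v z)" for y
  proof -
    have "mult_op h (delta y) = (\<lambda>z. if z = y then h y else 0)"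
      by (auto simp: mult_op_def delta_def fun_eq_iff)
    moreover have "mult_op h (delta y) \<in> mult_op h ` l2" by simp
    ultimately show ?thesis unfolding v(2) by auto
  qed
  have "\<exists>y. h y \<noteq> 0"
  proof (rule ccontr)
    assume "\<not> (\<exists>y. h y \<noteq> 0)"
    hence "mult_op h ` l2 \<subseteq> {\<lambda>_. 0}" by (auto simp: mult_op_def)
    moreover have "(\<lambda>y. 1 * v y) \<in> mult_op h ` l2" unfolding v(2) by blast
    ultimately show False using v(1) by auto
  qed
  then obtain y where hy: "h y \<noteq> 0" by blast
  have hy1: "h y = 1" using hh[of y] hy by (metis mult_cancel_right2)
  have uniq: "h z = 0" if "z \<noteq> y" for z
  proof (rule ccontr)
    assume hz: "h z \<noteq> 0"
    obtain c1 where c1: "(\<lambda>w. if w = y then h y else 0) = (\<lambda>w. c1 * v w)" using in_img[of y] by blast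
    obtain c2 where c2: "(\<lambda>w. if w = z then h z else 0) = (\<lambda>w. c2 * v w)" using in_img[of z] by blast
    have "v y \<noteq> 0" using fun_cong[OF c1, of y] hy by auto
    moreover have "c2 * v y = 0" using fun_cong[OF c2, of y] that by simp
    ultimately show False using fun_cong[OF c2, of z] hz by simp
  qed
  have "h = delta y" using hy1 uniq by (auto simp: delta_def fun_eq_iff)
  thus ?thesis using exy_mult by metis
qed

lemma chi_uroe: "(chi A :: ('a::metric_space) op) \<in> uroe"
  unfolding chi_def by (rule mult_op_uroe[OF bounded_indicator])

lemma chi_idem: "chi Z \<circ> chi Z = chi Z"
proof -
  have "(\<lambda>x. (if x \<in> Z then (1::complex) else 0) * (if x \<in> Z then 1 else 0)) = (\<lambda>x. if x \<in> Z then 1 else 0)"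
    by (auto simp: fun_eq_iff)
  thus ?thesis unfolding chi_def by (simp add: mult_op_comp[OF bounded_indicator])
qed

lemma chi_apply_delta: "chi Z (delta y) z = (if z = y \<and> y \<in> Z then 1 else 0)"
  by (simp add: chi_def mult_op_def delta_def)

lemma chi_chi_apply: "chi Z (chi Z f) = chi Z f"
  using chi_idem[of Z] by (metis comp_apply)

text \<open>In bra-ket notation \<open>dyad u x = |u\<rangle>\<langle>\<delta>\<^sub>x|\<close> and \<open>dyad_adj x u = |\<delta>\<^sub>x\<rangle>\<langle>u|\<close>.\<close>

definition dyad :: "('a \<Rightarrow> complex) \<Rightarrow> 'a \<Rightarrow> 'a op" where
  "dyad u x = (\<lambda>g. if g \<in> l2 then (\<lambda>z. g x * u z) else (\<lambda>_. 0))"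

definition dyad_adj :: "'a \<Rightarrow> ('a \<Rightarrow> complex) \<Rightarrow> 'a op" where
  "dyad_adj x u = (\<lambda>g. if g \<in> l2 then (\<lambda>z. if z = x then l2inner g u else 0) else (\<lambda>_. 0))"

lemma dyad_apply: "g \<in> l2 \<Longrightarrow> dyad u x g = (\<lambda>z. g x * u z)"
  by (simp add: dyad_def)

lemma dyad_delta: "dyad u x (delta x) = u"
  by (simp add: dyad_def delta_def)

lemma bop_dyad:
  assumes "u \<in> l2" shows "bop (dyad u x)"
proof -
  have b: "l2norm (\<lambda>z. g x * u z) \<le> l2norm u * l2norm g" if "g \<in> l2" for g
  proof -
    have "l2norm (\<lambda>z. g x * u z) = cmod (g x) * l2norm u" by (rule l2_scale(2)[OF assms])
    also have "\<dots> \<le> l2norm g * l2norm u"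
      by (rule mult_right_mono[OF norm_le_l2norm[OF that] l2norm_nonneg])
    finally show ?thesis by (simp add: mult.commute)
  qed
  show ?thesis
  proof (rule bopI[where K="l2norm u"])
    fix f :: "'a \<Rightarrow> complex" assume f: "f \<in> l2"
    show "dyad u x f \<in> l2" "l2norm (dyad u x f) \<le> l2norm u * l2norm f"
      using b[OF f] l2_scale(1)[OF assms, of "f x"] f by (simp_all only: dyad_apply)
  next
    fix f g :: "'a \<Rightarrow> complex" and c assume fg: "f \<in> l2" "g \<in> l2"
    have "(\<lambda>x. f x + c * g x) \<in> l2" by (rule l2_lincomb(1)[OF fg])
    thus "dyad u x (\<lambda>x. f x + c * g x) = (\<lambda>z. dyad u x f z + c * dyad u x g z)"
      using fg by (simp add: dyad_def distrib_right mult.assoc)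
  qed (simp add: dyad_def)
qed

lemma op_norm_dyad:
  assumes "u \<in> l2" shows "op_norm (dyad u x) \<le> l2norm u"
proof (rule op_norm_le)
  fix g :: "'a \<Rightarrow> complex" assume g: "g \<in> l2" "l2norm g \<le> 1"
  have "l2norm (dyad u x g) = cmod (g x) * l2norm u" using l2_scale(2)[OF assms, of "g x"] g by (simp add: dyad_def)
  also have "\<dots> \<le> 1 * l2norm u"
    using norm_le_l2norm[OF g(1), of x] g(2) l2norm_nonneg[of u] by (intro mult_right_mono) auto
  finally show "l2norm (dyad u x g) \<le> l2norm u" by simp
qed

lemma bop_dyad_adj:
  assumes "u \<in> l2" shows "bop (dyad_adj x u)"
proof -
  have b: "l2norm (\<lambda>z. if z = x then l2inner g u else 0) \<le> l2norm u * l2norm g" if "g \<in> l2" for g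
    using l2inner_Cauchy_Schwarz[OF that assms] by (simp add: l2norm_single' mult.commute)
  have lin: "(\<lambda>z. if z = x then l2inner (\<lambda>x. f x + c * g x) u else 0) =
     (\<lambda>z. (if z = x then l2inner f u else 0) + c * (if z = x then l2inner g u else 0))"
    if "f \<in> l2" "g \<in> l2" for f g c
    using l2inner_lin_left[OF that assms] by auto
  show ?thesis
  proof (rule bopI[where K="l2norm u"])
    fix f :: "'a \<Rightarrow> complex" assume f: "f \<in> l2"
    show "dyad_adj x u f \<in> l2" "l2norm (dyad_adj x u f) \<le> l2norm u * l2norm f"
      using b[OF f] f by (simp_all add: dyad_adj_def single_l2)
  next
    fix f g :: "'a \<Rightarrow> complex" and c assume fg: "f \<in> l2" "g \<in> l2"
    have "(\<lambda>x. f x + c * g x) \<in> l2" by (rule l2_lincomb(1)[OF fg])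
    thus "dyad_adj x u (\<lambda>x. f x + c * g x) = (\<lambda>z. dyad_adj x u f z + c * dyad_adj x u g z)"
      using fg lin[OF fg, of c] by (simp add: dyad_adj_def)
  qed (simp add: dyad_adj_def)
qed

lemma op_norm_dyad_adj:
  assumes "u \<in> l2" shows "op_norm (dyad_adj x u) \<le> l2norm u"
proof (rule op_norm_le)
  fix g :: "'a \<Rightarrow> complex" assume g: "g \<in> l2" "l2norm g \<le> 1"
  have "l2norm (dyad_adj x u g) = cmod (l2inner g u)" using g by (simp add: dyad_adj_def l2norm_single')
  also have "\<dots> \<le> l2norm g * l2norm u" by (rule l2inner_Cauchy_Schwarz[OF g(1) assms])
  also have "\<dots> \<le> 1 * l2norm u" using g(2) l2norm_nonneg[of u] by (intro mult_right_mono) auto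
  finally show "l2norm (dyad_adj x u g) \<le> l2norm u" by simp
qed

lemma entry_dyad: "entry (dyad u x) a b = (if a = x then u b else 0)"
  by (simp add: entry_def dyad_def delta_def)

lemma entry_dyad_adj: "entry (dyad_adj x u) a b = (if b = x then cnj (u a) else 0)"
proof -
  have "dyad_adj x u (delta a) = (\<lambda>z. if z = x then l2inner (delta a) u else 0)"
    unfolding dyad_adj_def using delta_l2[of a] by (simp only: if_True)
  thus ?thesis unfolding entry_def by (simp only: l2inner_delta_left)
qed

lemma dyad_uroe:
  fixes u :: "('a::metric_space) \<Rightarrow> complex"
  assumes "u \<in> l2" shows "dyad u x \<in> uroe"
  unfolding uroe_def
proof (intro CollectI conjI allI impI)
  show "bop (dyad u x)" by (rule bop_dyad[OF assms])
  fix e :: real assume e: "e > 0"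
  obtain F where F: "finite F" "l2norm (\<lambda>z. if z \<in> F then 0 else u z) < e"
    using l2_tail[OF assms e] by blast
  define t where "t = (\<lambda>z. if z \<in> F then 0 else u z)"
  define hd where "hd = (\<lambda>z. if z \<in> F then u z else 0)"
  have hd: "hd \<in> l2" by (rule l2_finite_support[OF F(1)]) (simp add: hd_def)
  have t: "t \<in> l2" using l2_mono(1)[OF assms, of t] by (simp add: t_def)
  have "propg_le (dyad hd x) (\<Sum>y\<in>F. dist x y)"
    unfolding propg_le_def entry_dyad
  proof (intro allI impI)
    fix a b assume "(if a = x then hd b else 0) \<noteq> 0"
    hence "a = x" "b \<in> F" by (auto simp: hd_def split: if_splits)
    thus "dist a b \<le> (\<Sum>y\<in>F. dist x y)"
      using F(1) by (auto intro: member_le_sum)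
  qed
  moreover have eq: "op_diff (dyad u x) (dyad hd x) = dyad t x"
    by (auto simp: op_diff_def dyad_def t_def hd_def fun_eq_iff algebra_simps)
  moreover have "op_norm (dyad t x) < e" using op_norm_dyad[OF t, of x] F(2) t_def by simp
  hence "op_norm (op_diff (dyad u x) (dyad hd x)) < e" unfolding eq .
  ultimately show "\<exists>S. bop S \<and> (\<exists>k. propg_le S k) \<and> op_norm (op_diff (dyad u x) S) < e"
    using bop_dyad[OF hd] by blast
qed

lemma dyad_adj_uroe:
  fixes u :: "('a::metric_space) \<Rightarrow> complex"
  assumes "u \<in> l2" shows "dyad_adj x u \<in> uroe"
  unfolding uroe_def
proof (intro CollectI conjI allI impI)
  show "bop (dyad_adj x u)" by (rule bop_dyad_adj[OF assms])
  fix e :: real assume e: "e > 0"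
  obtain F where F: "finite F" "l2norm (\<lambda>z. if z \<in> F then 0 else u z) < e"
    using l2_tail[OF assms e] by blast
  define t where "t = (\<lambda>z. if z \<in> F then 0 else u z)"
  define hd where "hd = (\<lambda>z. if z \<in> F then u z else 0)"
  have hd: "hd \<in> l2" by (rule l2_finite_support[OF F(1)]) (simp add: hd_def)
  have t: "t \<in> l2" using l2_mono(1)[OF assms, of t] by (simp add: t_def)
  have "propg_le (dyad_adj x hd) (\<Sum>y\<in>F. dist x y)"
    unfolding propg_le_def entry_dyad_adj
  proof (intro allI impI)
    fix a b assume "(if b = x then cnj (hd a) else 0) \<noteq> 0"
    hence "b = x" "a \<in> F" by (auto simp: hd_def split: if_splits)
    thus "dist a b \<le> (\<Sum>y\<in>F. dist x y)"
      using F(1) by (auto intro: member_le_sum simp: dist_commute)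
  qed
  moreover have eq: "op_diff (dyad_adj x u) (dyad_adj x hd) = dyad_adj x t"
  proof (rule ext)+
    fix g z
    show "op_diff (dyad_adj x u) (dyad_adj x hd) g z = dyad_adj x t g z"
    proof (cases "g \<in> l2")
      case True
      have "u = (\<lambda>z. hd z + t z)" by (auto simp: hd_def t_def)
      hence "l2inner g u = l2inner g hd + l2inner g t" using l2inner_add_right[OF True hd t] by simp
      thus ?thesis using True by (simp add: op_diff_def dyad_adj_def)
    qed (simp add: op_diff_def dyad_adj_def)
  qed
  moreover have "op_norm (dyad_adj x t) < e" using op_norm_dyad_adj[OF t, of x] F(2) t_def by simp
  hence "op_norm (op_diff (dyad_adj x u) (dyad_adj x hd)) < e" unfolding eq .
  ultimately show "\<exists>S. bop S \<and> (\<exists>k. propg_le S k) \<and> op_norm (op_diff (dyad_adj x u) S) < e"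
    using bop_dyad_adj[OF hd] by blast
qed

lemma adj_dyad:
  assumes "u \<in> l2" shows "adj (dyad u x) = dyad_adj x u"
proof (rule ext)
  fix g :: "'a \<Rightarrow> complex"
  show "adj (dyad u x) g = dyad_adj x u g"
  proof (cases "g \<in> l2")
    case True
    define h0 where "h0 = (\<lambda>z. if z = x then l2inner g u else 0)"
    have P: "h0 \<in> l2 \<and> (\<forall>f\<in>l2. l2inner (dyad u x f) g = l2inner f h0)"
    proof (intro conjI ballI)
      show "h0 \<in> l2" unfolding h0_def by (rule single_l2)
      fix f :: "'a \<Rightarrow> complex" assume f: "f \<in> l2"
      have "l2inner (dyad u x f) g = f x * l2inner u g" using f by (simp add: dyad_def l2inner_scale_left)
      also have "\<dots> = l2inner f h0" unfolding h0_def l2inner_single_right by (simp add: l2inner_cnj)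
      finally show "l2inner (dyad u x f) g = l2inner f h0" .
    qed
    have U: "h = h0" if "h \<in> l2 \<and> (\<forall>f\<in>l2. l2inner (dyad u x f) g = l2inner f h)" for h
    proof
      fix y
      have a: "\<forall>f\<in>l2. l2inner (dyad u x f) g = l2inner f h" using that by blast
      have b: "\<forall>f\<in>l2. l2inner (dyad u x f) g = l2inner f h0" using P by blast
      have "l2inner (delta y) h = l2inner (delta y) h0"
        using a[rule_format, OF delta_l2] b[rule_format, OF delta_l2] by simp
      thus "h y = h0 y" by (simp add: l2inner_delta_left)
    qed
    have "adj (dyad u x) g = h0"
    proof -
      have "(THE h. h \<in> l2 \<and> (\<forall>f\<in>l2. l2inner (dyad u x f) g = l2inner f h)) = h0"
        apply (rule the_equality)
         apply (rule P)
        apply (erule U)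
        done
      thus ?thesis unfolding adj_def using True by simp
    qed
    thus ?thesis using True by (simp add: dyad_adj_def h0_def)
  qed (simp add: adj_def dyad_adj_def)
qed

lemma bop_comp_exy: "bop T \<Longrightarrow> T \<circ> exy x x = dyad (T (delta x)) x"
proof (rule ext)
  fix g assume T: "bop T"
  show "(T \<circ> exy x x) g = dyad (T (delta x)) x g"
  proof (cases "g \<in> l2")
    case True
    have "exy x x g = (\<lambda>z. g x * delta x z)" using True by (auto simp: exy_def delta_def)
    thus ?thesis using True bop_scale[OF T delta_l2] by (simp add: dyad_def)
  qed (simp add: exy_def dyad_def bop_zero[OF T])
qed

lemma mult_op_comp_dyad:
  assumes "u \<in> l2" "bounded (range h)"
  shows "mult_op h \<circ> dyad u x = dyad (\<lambda>z. h z * u z) x"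
proof (rule ext)
  fix g
  show "(mult_op h \<circ> dyad u x) g = dyad (\<lambda>z. h z * u z) x g"
  proof (cases "g \<in> l2")
    case True
    have "(\<lambda>z. g x * u z) \<in> l2" using l2_scale(1)[OF assms(1)] .
    thus ?thesis using True by (simp add: dyad_def mult_op_def mult.left_commute)
  qed (simp add: dyad_def mult_op_def)
qed

lemma dyad_adj_zero: "dyad_adj x u (\<lambda>_. 0) = (\<lambda>_. 0)"
  unfolding dyad_adj_def l2inner_def by (simp add: fun_eq_iff)

lemma dyad_adj_comp_dyad:
  assumes "u \<in> l2"
  shows "dyad_adj x u \<circ> dyad u x = op_scale (l2inner u u) (exy x x)"
proof (rule ext)
  fix g
  show "(dyad_adj x u \<circ> dyad u x) g = op_scale (l2inner u u) (exy x x) g"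
  proof (cases "g \<in> l2")
    case True
    have "(\<lambda>z. g x * u z) \<in> l2" using l2_scale(1)[OF assms(1)] .
    thus ?thesis using True by (simp add: dyad_def dyad_adj_def op_scale_def exy_def l2inner_scale_left fun_eq_iff)
  next
    case False
    hence "dyad u x g = (\<lambda>_. 0)" by (simp add: dyad_def)
    thus ?thesis using False by (simp add: dyad_adj_zero op_scale_def exy_def)
  qed
qed

lemma op_add_dyad: "op_add (dyad v x) (dyad w x) = dyad (\<lambda>z. v z + w z) x"
proof (rule ext)+
  fix g z
  show "op_add (dyad v x) (dyad w x) g z = dyad (\<lambda>z. v z + w z) x g z"
    by (cases "g \<in> l2") (simp_all add: op_add_def dyad_def distrib_left)
qed

definition band :: "real \<Rightarrow> ('a::metric_space) op" where
  "band r = (\<lambda>g. if g \<in> l2 then (\<lambda>z. \<Sum>y\<in>cball z r. g y) else (\<lambda>_. 0))"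

lemma unif_locally_finiteE:
  assumes "unif_locally_finite TYPE('a::metric_space)"
  obtains N :: nat where "\<And>x::'a. finite (cball x r)" "\<And>x::'a. card (cball x r) \<le> N"
  using assms unfolding unif_locally_finite_def by blast

lemma sum_cball_swap:
  fixes a :: "'a::metric_space \<Rightarrow> real"
  assumes fin: "\<And>x::'a. finite (cball x r)" and F: "finite F"
  shows "(\<Sum>z\<in>F. \<Sum>y\<in>cball z r. a y) = (\<Sum>y\<in>(\<Union>z\<in>F. cball z r). a y * card {z\<in>F. y \<in> cball z r})"
proof -
  define G where "G = (\<Union>z\<in>F. cball z r)"
  have G: "finite G" using F fin by (simp add: G_def)
  have "(\<Sum>z\<in>F. \<Sum>y\<in>cball z r. a y) = (\<Sum>z\<in>F. \<Sum>y\<in>{y\<in>G. y \<in> cball z r}. a y)"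
  proof (rule sum.cong[OF refl])
    fix z assume "z \<in> F"
    hence "{y\<in>G. y \<in> cball z r} = cball z r" by (auto simp: G_def)
    thus "(\<Sum>y\<in>cball z r. a y) = (\<Sum>y\<in>{y\<in>G. y \<in> cball z r}. a y)" by simp
  qed
  also have "\<dots> = (\<Sum>y\<in>G. \<Sum>z\<in>{z\<in>F. y \<in> cball z r}. a y)"
    by (rule sum.swap_restrict[OF F G])
  also have "\<dots> = (\<Sum>y\<in>G. a y * card {z\<in>F. y \<in> cball z r})"
    by (simp add: mult.commute)
  finally show ?thesis by (simp add: G_def)
qed

text \<open>Each point lies in at most \<open>N\<close> of the balls, so a finite sum of ball sums counts every
  term at most \<open>N\<close> times.\<close>

lemma sum_cball_sums_le:
  fixes a :: "'a::metric_space \<Rightarrow> real"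
  assumes fin: "\<And>x::'a. finite (cball x r)" and cN: "\<And>x::'a. card (cball x r) \<le> N"
    and F: "finite F" and a0: "\<And>y. a y \<ge> 0" and sa: "a summable_on UNIV"
  shows "(\<Sum>z\<in>F. \<Sum>y\<in>cball z r. a y) \<le> real N * infsum a UNIV"
proof -
  define G where "G = (\<Union>z\<in>F. cball z r)"
  have G: "finite G" using F fin by (simp add: G_def)
  have "(\<Sum>z\<in>F. \<Sum>y\<in>cball z r. a y) = (\<Sum>y\<in>G. a y * card {z\<in>F. y \<in> cball z r})"
    unfolding G_def by (rule sum_cball_swap[OF fin F])
  also have "\<dots> \<le> (\<Sum>y\<in>G. a y * real N)"
  proof (rule sum_mono)
    fix y
    have "{z\<in>F. y \<in> cball z r} \<subseteq> cball y r" by (auto simp: dist_commute)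
    hence "card {z\<in>F. y \<in> cball z r} \<le> N" using card_mono[OF fin] cN[of y] le_trans by blast
    thus "a y * real (card {z\<in>F. y \<in> cball z r}) \<le> a y * real N"
      by (intro mult_left_mono a0) simp
  qed
  also have "\<dots> = real N * (\<Sum>y\<in>G. a y)" by (simp add: sum_distrib_left mult.commute)
  also have "\<dots> \<le> real N * infsum a UNIV"
    by (intro mult_left_mono finite_sum_le_infsum[OF sa G]) (simp_all add: a0)
  finally show ?thesis .
qed

lemma band_l2:
  fixes g :: "'a::metric_space \<Rightarrow> complex"
  assumes fin: "\<And>x::'a. finite (cball x r)" and cN: "\<And>x::'a. card (cball x r) \<le> N"
    and g: "g \<in> l2"
  shows "(\<lambda>z. \<Sum>y\<in>cball z r. g y) \<in> l2 \<and> l2norm (\<lambda>z. \<Sum>y\<in>cball z r. g y) \<le> real N * l2norm g"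
proof -
  define a where "a = (\<lambda>y. (cmod (g y))\<^sup>2)"
  have a0: "a y \<ge> 0" for y by (simp add: a_def)
  have sa: "a summable_on UNIV" using g unfolding a_def by (simp add: l2_def)
  define \<phi> where "\<phi> z = real N * (\<Sum>y\<in>cball z r. a y)" for z
  have fs: "sum \<phi> F \<le> (real N * l2norm g)\<^sup>2" if F: "finite F" for F
  proof -
    have "sum \<phi> F = real N * (\<Sum>z\<in>F. \<Sum>y\<in>cball z r. a y)"
      by (simp add: \<phi>_def sum_distrib_left)
    also have "\<dots> \<le> real N * (real N * infsum a UNIV)"
      by (intro mult_left_mono sum_cball_sums_le[OF fin cN F a0 sa]) simp
    also have "infsum a UNIV = (l2norm g)\<^sup>2" by (simp add: a_def l2norm_sq)
    finally show ?thesis by (simp add: power_mult_distrib power2_eq_square mult_ac)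
  qed
  have sph: "\<phi> summable_on UNIV"
    by (rule nonneg_bdd_above_summable_on) (use fs in \<open>auto intro!: bdd_aboveI simp: \<phi>_def a0 sum_nonneg\<close>)
  have pt: "(cmod (\<Sum>y\<in>cball z r. g y))\<^sup>2 \<le> \<phi> z" for z
  proof -
    have "(cmod (\<Sum>y\<in>cball z r. g y))\<^sup>2 \<le> (\<Sum>y\<in>cball z r. cmod (g y))\<^sup>2"
      by (intro power_mono norm_sum) simp
    also have "\<dots> \<le> (\<Sum>y\<in>cball z r. (cmod (g y))\<^sup>2) * card (cball z r)"
      by (rule sum_squared_le_sum_of_squares)
    also have "\<dots> \<le> (\<Sum>y\<in>cball z r. (cmod (g y))\<^sup>2) * N"
      by (rule mult_left_mono) (use cN[of z] in \<open>auto intro: sum_nonneg\<close>)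
    finally show ?thesis by (simp add: \<phi>_def a_def mult.commute)
  qed
  have s: "(\<lambda>z. (cmod (\<Sum>y\<in>cball z r. g y))\<^sup>2) summable_on UNIV"
    by (rule summable_on_comparison_test[OF sph]) (use pt in auto)
  have "(l2norm (\<lambda>z. \<Sum>y\<in>cball z r. g y))\<^sup>2 \<le> infsum \<phi> UNIV"
    unfolding l2norm_sq by (rule infsum_mono[OF s sph]) (use pt in auto)
  also have "\<dots> \<le> (real N * l2norm g)\<^sup>2" by (rule infsum_le_finite_sums[OF sph fs])
  finally have "l2norm (\<lambda>z. \<Sum>y\<in>cball z r. g y) \<le> real N * l2norm g"
    by (rule power2_le_imp_le) (simp add: l2norm_nonneg)
  moreover have "(\<lambda>z. \<Sum>y\<in>cball z r. g y) \<in> l2" using s by (simp add: l2_def)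
  ultimately show ?thesis by blast
qed

lemma band_bop:
  assumes ulf: "unif_locally_finite TYPE('a::metric_space)"
  shows "bop (band r :: 'a op)"
proof -
  obtain N :: nat where fin: "\<And>x::'a. finite (cball x r)" and cN: "\<And>x::'a. card (cball x r) \<le> N"
    using unif_locally_finiteE[OF ulf] by blast
  show ?thesis
  proof (rule bopI[where K="real N"])
    fix f :: "'a \<Rightarrow> complex" assume "f \<notin> l2" thus "band r f = (\<lambda>_. 0)" by (simp add: band_def)
  next
    fix f :: "'a \<Rightarrow> complex" assume f: "f \<in> l2"
    show "band r f \<in> l2" "l2norm (band r f) \<le> real N * l2norm f"
      using band_l2[OF fin cN f] f by (simp_all add: band_def)
  next
    fix f g :: "'a \<Rightarrow> complex" and c assume fg: "f \<in> l2" "g \<in> l2"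
    have "(\<lambda>x. f x + c * g x) \<in> l2" by (rule l2_lincomb(1)[OF fg])
    thus "band r (\<lambda>x. f x + c * g x) = (\<lambda>x. band r f x + c * band r g x)"
      using fg by (simp add: band_def sum.distrib sum_distrib_left)
  qed
qed

lemma band_apply: "g \<in> l2 \<Longrightarrow> band r g = (\<lambda>z. \<Sum>y\<in>cball z r. g y)"
  by (simp add: band_def)

lemma band_delta:
  assumes ulf: "unif_locally_finite TYPE('a::metric_space)"
  shows "band r (delta a) z = (if dist z (a::'a) \<le> r then 1 else 0)"
proof -
  obtain N :: nat where fin: "\<And>x::'a. finite (cball x r)"
    using unif_locally_finiteE[OF ulf] by blast
  have "band r (delta a) z = (\<Sum>y\<in>cball z r. if y = a then 1 else 0)"
    by (simp add: band_apply delta_def)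
  also have "\<dots> = (if a \<in> cball z r then 1 else 0)"
    using fin by simp
  finally show ?thesis by simp
qed

lemma band_propg:
  assumes ulf: "unif_locally_finite TYPE('a::metric_space)"
  shows "propg_le (band r :: 'a op) r"
  unfolding propg_le_def entry_def band_delta[OF ulf]
  by (auto simp: dist_commute split: if_splits)

lemma band_uroe:
  assumes ulf: "unif_locally_finite TYPE('a::metric_space)"
  shows "(band r :: 'a op) \<in> uroe"
  by (rule finite_propg_uroe[OF band_bop[OF ulf] band_propg[OF ulf]])

definition corner :: "'a set \<Rightarrow> ('a::metric_space) op set" where
  "corner Z = {chi Z \<circ> b \<circ> chi Z | b. b \<in> uroe}"

lemma corner_bop: "c \<in> corner Z \<Longrightarrow> bop c"
  unfolding corner_def by (auto intro!: bop_comp simp: uroe_bop chi_uroe)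

lemma corner_apply_chi: "c \<in> corner Z \<Longrightarrow> c (chi Z f) = c f"
  unfolding corner_def by (auto simp: chi_chi_apply)

lemma corner_band_delta:
  fixes y z :: "'a::metric_space"
  assumes "unif_locally_finite TYPE('a)" "y \<in> Z" "z \<in> Z"
  shows "chi Z (band r (chi Z (delta y))) z = (if dist z y \<le> r then 1 else 0)"
proof -
  have "chi Z (delta y) = delta y"
    using assms(2) by (auto simp: chi_def mult_op_def delta_def fun_eq_iff)
  moreover have "band r (delta y) \<in> l2" by (rule bop_l2[OF band_bop[OF assms(1)] delta_l2])
  ultimately show ?thesis
    using assms(3) by (simp add: chi_def mult_op_apply band_delta[OF assms(1)])
qed

section \<open>Embeddings mapping diagonal matrix units to diagonal matrix units\<close>

locale diag_rank_one_embedding =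
  fixes \<Phi> :: "('a::metric_space) op \<Rightarrow> ('b::metric_space) op"
  assumes emb: "embedding \<Phi>" and lin: "\<Phi> ` linf \<subseteq> linf"
    and rk: "\<forall>x::'a. rank_one (\<Phi> (exy x x))"
begin

lemma Phi_uroe: "T \<in> uroe \<Longrightarrow> \<Phi> T \<in> uroe"
  using emb by (auto simp: embedding_def)

lemma Phi_bop: "T \<in> uroe \<Longrightarrow> bop (\<Phi> T)"
  using Phi_uroe uroe_bop by blast

lemma Phi_add: "S \<in> uroe \<Longrightarrow> T \<in> uroe \<Longrightarrow> \<Phi> (op_add S T) = op_add (\<Phi> S) (\<Phi> T)"
  using emb by (simp add: embedding_def)

lemma Phi_comp: "S \<in> uroe \<Longrightarrow> T \<in> uroe \<Longrightarrow> \<Phi> (S \<circ> T) = \<Phi> S \<circ> \<Phi> T"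
  using emb by (simp add: embedding_def)

lemma Phi_scale: "T \<in> uroe \<Longrightarrow> \<Phi> (op_scale c T) = op_scale c (\<Phi> T)"
  using emb by (simp add: embedding_def)

lemma Phi_adj: "T \<in> uroe \<Longrightarrow> \<Phi> (adj T) = adj (\<Phi> T)"
  using emb by (simp add: embedding_def)

lemma Phi_zero_op: "\<Phi> zero_op = zero_op"
proof -
  have "op_add zero_op zero_op = (zero_op :: 'a op)" by (simp add: op_add_def zero_op_def)
  hence E: "\<Phi> zero_op = op_add (\<Phi> zero_op) (\<Phi> zero_op)"
    using Phi_add[OF zero_op_uroe zero_op_uroe] by simp
  have "\<Phi> zero_op f x = 0" for f x
    using fun_cong[OF fun_cong[OF E, of f], of x] by (simp add: op_add_def)
  thus ?thesis by (simp add: zero_op_def fun_eq_iff)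
qed

lemma Phi_exy_is_exy: "\<exists>y. \<Phi> (exy x x) = exy y y"
proof -
  obtain h where h: "\<Phi> (exy x x) = mult_op h" "bounded (range h)"
    using subsetD[OF lin imageI[OF exy_linf]] by (auto simp: linf_def)
  have "mult_op h \<circ> mult_op h = mult_op h"
    using Phi_comp[OF exy_diag_uroe exy_diag_uroe, of x x] h(1) by (simp add: exy_idem)
  moreover have "rank_one (mult_op h)" using rk h(1) by metis
  ultimately show ?thesis using mult_op_idem_rank_one_eq_exy[OF h(2)] h(1) by metis
qed

definition phi :: "'a \<Rightarrow> 'b" where "phi x = (SOME y. \<Phi> (exy x x) = exy y y)"

lemma Phi_exy: "\<Phi> (exy x x) = exy (phi x) (phi x)"
  unfolding phi_def by (rule someI_ex[OF Phi_exy_is_exy])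

lemma phi_inj: "inj phi"
proof (rule injI)
  fix x x' assume e: "phi x = phi x'"
  show "x = x'"
  proof (rule ccontr)
    assume "x \<noteq> x'"
    hence "\<Phi> (exy x x \<circ> exy x' x') = zero_op" by (simp add: exy_comp_ne Phi_zero_op)
    moreover have "\<Phi> (exy x x \<circ> exy x' x') = exy (phi x) (phi x)"
      using Phi_comp[OF exy_diag_uroe exy_diag_uroe, of x x'] by (simp add: Phi_exy e exy_idem)
    ultimately show False using exy_ne_zero_op by metis
  qed
qed

lemma Phi_apply_delta_phi:
  assumes "T \<in> uroe"
  shows "\<Phi> T (delta (phi x)) = \<Phi> (dyad (T (delta x)) x) (delta (phi x))"
proof -
  have "\<Phi> (dyad (T (delta x)) x) = \<Phi> T \<circ> exy (phi x) (phi x)"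
    using Phi_comp[OF assms exy_diag_uroe, of x] bop_comp_exy[OF uroe_bop[OF assms]] Phi_exy by simp
  thus ?thesis by (simp add: exy_delta)
qed

lemma Phi_dyad_eq:
  assumes u: "u \<in> l2"
  shows "\<Phi> (dyad u x) = dyad (\<Phi> (dyad u x) (delta (phi x))) (phi x)"
proof -
  have R: "dyad u x \<in> uroe" by (rule dyad_uroe[OF u])
  have "dyad u x \<circ> exy x x = dyad u x" by (simp add: bop_comp_exy[OF bop_dyad[OF u]] dyad_delta)
  hence "\<Phi> (dyad u x) = \<Phi> (dyad u x) \<circ> exy (phi x) (phi x)"
    using Phi_comp[OF R exy_diag_uroe, of x] Phi_exy by simp
  also have "\<dots> = dyad (\<Phi> (dyad u x) (delta (phi x))) (phi x)"
    by (rule bop_comp_exy[OF Phi_bop[OF R]])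
  finally show ?thesis .
qed

text \<open>Both sides of the identity \<open>adj T \<circ> T = \<parallel>u\<parallel>\<^sup>2 e\<^sub>x\<^sub>x\<close> for \<open>T = dyad u x\<close> are transported by \<open>\<Phi>\<close>.\<close>

lemma l2norm_Phi_dyad:
  assumes u: "u \<in> l2"
  shows "l2norm (\<Phi> (dyad u x) (delta (phi x))) = l2norm u"
proof -
  have R: "dyad u x \<in> uroe" by (rule dyad_uroe[OF u])
  define v where "v = \<Phi> (dyad u x) (delta (phi x))"
  have v: "v \<in> l2" unfolding v_def by (rule bop_l2[OF Phi_bop[OF R] delta_l2])
  have PR: "\<Phi> (dyad u x) = dyad v (phi x)" unfolding v_def by (rule Phi_dyad_eq[OF u])
  have "\<Phi> (adj (dyad u x) \<circ> dyad u x) = \<Phi> (adj (dyad u x)) \<circ> \<Phi> (dyad u x)"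
    unfolding adj_dyad[OF u] by (rule Phi_comp[OF dyad_adj_uroe[OF u] R])
  also have "\<dots> = adj (\<Phi> (dyad u x)) \<circ> \<Phi> (dyad u x)" by (simp add: Phi_adj[OF R])
  also have "\<dots> = op_scale (l2inner v v) (exy (phi x) (phi x))"
    unfolding PR adj_dyad[OF v] by (rule dyad_adj_comp_dyad[OF v])
  finally have A: "\<Phi> (adj (dyad u x) \<circ> dyad u x) = op_scale (l2inner v v) (exy (phi x) (phi x))" .
  have B: "\<Phi> (adj (dyad u x) \<circ> dyad u x) = op_scale (l2inner u u) (exy (phi x) (phi x))"
    unfolding adj_dyad[OF u] dyad_adj_comp_dyad[OF u] by (simp add: Phi_scale[OF exy_diag_uroe] Phi_exy)
  have "op_scale (l2inner u u) (exy (phi x) (phi x)) (delta (phi x)) (phi x)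
      = op_scale (l2inner v v) (exy (phi x) (phi x)) (delta (phi x)) (phi x)"
    using A B by simp
  hence "l2inner u u = l2inner v v" by (simp only: op_scale_def exy_delta) (simp add: delta_def)
  hence "(l2norm u)\<^sup>2 = (l2norm v)\<^sup>2" using l2inner_self[OF u] l2inner_self[OF v] by (metis of_real_eq_iff)
  hence "l2norm u = l2norm v" using l2norm_nonneg[of u] l2norm_nonneg[of v] by (simp add: power2_eq_iff_nonneg)
  thus ?thesis by (simp add: v_def)
qed

lemma norm_Phi_dyad_at_phi:
  assumes u: "u \<in> l2"
  shows "cmod (\<Phi> (dyad u x) (delta (phi x)) (phi y)) = cmod (u y)"
proof -
  define uy where "uy = (\<lambda>z. if z = y then u y else 0)"
  have uy: "uy \<in> l2" unfolding uy_def by (rule single_l2)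
  have "(\<lambda>z. delta y z * u z) = uy" by (auto simp: delta_def uy_def fun_eq_iff)
  hence "exy y y \<circ> dyad u x = dyad uy x"
    unfolding exy_mult by (simp add: mult_op_comp_dyad[OF u bounded_delta])
  hence "\<Phi> (dyad uy x) = exy (phi y) (phi y) \<circ> \<Phi> (dyad u x)"
    using Phi_comp[OF exy_diag_uroe dyad_uroe[OF u], of y x] Phi_exy by simp
  hence "\<Phi> (dyad uy x) (delta (phi x)) = (\<lambda>z. if z = phi y then \<Phi> (dyad u x) (delta (phi x)) (phi y) else 0)"
    using bop_l2[OF Phi_bop[OF dyad_uroe[OF u]] delta_l2] by (simp add: exy_def)
  hence "l2norm (\<Phi> (dyad uy x) (delta (phi x))) = cmod (\<Phi> (dyad u x) (delta (phi x)) (phi y))"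
    by (simp add: l2norm_single')
  moreover have "l2norm uy = cmod (u y)" unfolding uy_def by (rule l2norm_single')
  ultimately show ?thesis using l2norm_Phi_dyad[OF uy] by simp
qed

lemma chi_diff_op_sum_Phi_exy_delta:
  assumes "finite G"
  shows "op_diff (chi Z) (op_sum (\<lambda>x. \<Phi> (exy x x)) G) (delta y)
    = (\<lambda>z. if z = y then (if y \<in> Z then 1 else 0) - (if y \<in> phi ` G then 1 else 0) else 0)"
proof
  fix z
  have e: "\<Phi> (exy x x) (delta y) z = (if phi x = y \<and> z = y then 1 else 0)" for x
    unfolding Phi_exy by (simp add: exy_def delta_def)
  have "(\<Sum>x\<in>G. \<Phi> (exy x x) (delta y) z) = (\<Sum>x\<in>G \<inter> phi -` {y}. if z = y then 1 else 0)"
    using assms by (intro sum.mono_neutral_cong_right) (auto simp: e)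
  also have "\<dots> = (if z = y \<and> y \<in> phi ` G then 1 else 0)"
  proof (cases "y \<in> phi ` G")
    case True
    then obtain x where "x \<in> G" "y = phi x" by blast
    hence "G \<inter> phi -` {y} = {x}" using inj_eq[OF phi_inj] by auto
    thus ?thesis using True by simp
  next
    case False
    hence "G \<inter> phi -` {y} = {}" by auto
    thus ?thesis using False by simp
  qed
  finally show "op_diff (chi Z) (op_sum (\<lambda>x. \<Phi> (exy x x)) G) (delta y) z
    = (if z = y then (if y \<in> Z then 1 else 0) - (if y \<in> phi ` G then 1 else 0) else 0)"
    by (simp add: op_diff_def op_sum_def chi_apply_delta)
qed

lemma Z_eq_range_phi:
  assumes "sot_sum (\<lambda>x. \<Phi> (exy x x)) (chi Z)"
  shows "Z = range phi"
proof (rule set_eqI)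
  fix y
  obtain F where F: "finite F" "\<And>G. finite G \<Longrightarrow> F \<subseteq> G \<Longrightarrow>
      l2norm (op_diff (chi Z) (op_sum (\<lambda>x. \<Phi> (exy x x)) G) (delta y)) < 1/2"
    using assms delta_l2[of y] unfolding sot_sum_def by (meson half_gt_zero zero_less_one)
  define G where "G = F \<union> phi -` {y}"
  have G: "finite G" "F \<subseteq> G" using F(1) finite_vimageI[OF _ phi_inj, of "{y}"] by (auto simp: G_def)
  have "cmod ((if y \<in> Z then 1 else 0) - (if y \<in> phi ` G then 1 else 0)) < 1/2"
    using F(2)[OF G] by (simp add: chi_diff_op_sum_Phi_exy_delta[OF G(1)] l2norm_single')
  moreover have "y \<in> phi ` G \<longleftrightarrow> y \<in> range phi" by (auto simp: G_def)
  ultimately show "y \<in> Z \<longleftrightarrow> y \<in> range phi" by (auto split: if_splits)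
qed

lemma coarse_map_phi:
  assumes ulf: "unif_locally_finite TYPE('a)"
  shows "coarse_map phi"
  unfolding coarse_map_def
proof
  fix r :: real
  have T: "(band r :: 'a op) \<in> uroe" by (rule band_uroe[OF ulf])
  obtain S k where S: "bop S" "propg_le S k" "op_norm (op_diff (\<Phi> (band r)) S) < 1"
    using uroe_approxE[OF Phi_uroe[OF T] zero_less_one] .
  have "dist (phi x) (phi x') \<le> k" if "dist x x' \<le> r" for x x'
  proof -
    have "band r (delta x) \<in> l2" by (rule bop_l2[OF band_bop[OF ulf] delta_l2])
    hence "cmod (\<Phi> (band r) (delta (phi x)) (phi x')) = 1"
      using that by (simp add: Phi_apply_delta_phi[OF T] norm_Phi_dyad_at_phi band_delta[OF ulf] dist_commute)
    hence "entry S (phi x) (phi x') \<noteq> 0"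
      using entry_nonzero_of_approx[OF Phi_bop[OF T] S(1)] S(3) by simp
    thus ?thesis using S(2) by (simp add: propg_le_def)
  qed
  thus "\<exists>s. \<forall>x x'. dist x x' \<le> r \<longrightarrow> dist (phi x) (phi x') \<le> s" by blast
qed

lemma corner_Phi_dyad_far_zero:
  assumes Z: "Z = range phi" and c: "c \<in> corner Z" "propg_le c k"
    and u: "u \<in> l2" "\<And>y. y \<notin> B \<Longrightarrow> u y = 0" and B: "finite B"
    and far: "\<And>w. w \<in> phi ` B \<Longrightarrow> k < dist z w"
  shows "c (\<Phi> (dyad u x) (delta (phi x))) z = 0"
proof -
  let ?v = "\<Phi> (dyad u x) (delta (phi x))"
  have v: "?v \<in> l2" by (intro bop_l2[OF Phi_bop] dyad_uroe u delta_l2)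
  have "chi Z ?v y = 0" if y: "y \<notin> phi ` B" for y
  proof (cases "y \<in> Z")
    case True
    then obtain y' where "y = phi y'" "y' \<notin> B" using Z y by blast
    thus ?thesis using norm_Phi_dyad_at_phi[OF u(1), of x y'] u(2) v by (simp add: chi_def mult_op_def)
  qed (simp add: chi_def mult_op_def)
  hence "c (chi Z ?v) z = 0"
    using B far by (intro propg_apply_far_zero[OF corner_bop[OF c(1)] c(2), where S="phi ` B"])
      (auto simp: dist_commute)
  thus ?thesis by (simp add: corner_apply_chi[OF c(1)])
qed

text \<open>Split \<open>T \<delta>\<^sub>x\<close> at the ball \<open>cball x \<delta>\<close>: \<open>c\<close> cannot move the image of the inner part to \<open>z\<close>,
  and the outer part is small because \<open>T\<close> is close to an operator of propagation less than \<open>\<delta>\<close>.\<close>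

lemma corner_Phi_entry_far_le:
  assumes ulf: "unif_locally_finite TYPE('a)" and Z: "Z = range phi"
    and c: "c \<in> corner Z" "propg_le c k"
    and T: "T \<in> uroe" and S: "bop S" "propg_le S k'" and k': "k' < \<delta>"
    and far: "\<And>w. w \<in> phi ` cball x \<delta> \<Longrightarrow> k < dist z w"
  shows "cmod (c (\<Phi> T (delta (phi x))) z) \<le> op_norm c * op_norm (op_diff T S)"
proof -
  define B where "B = cball x \<delta>"
  define w where "w = T (delta x)"
  define inner where "inner = (\<lambda>y. if y \<in> B then w y else 0)"
  define outer where "outer = (\<lambda>y. if y \<in> B then 0 else w y)"
  define d where "d = delta (phi x)"
  have w: "w \<in> l2" unfolding w_def by (rule bop_l2[OF uroe_bop[OF T] delta_l2])
  have inner: "inner \<in> l2" and outer: "outer \<in> l2"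
    using l2_mono(1)[OF w] by (auto simp: inner_def outer_def)
  let ?vi = "\<Phi> (dyad inner x) d" and ?vo = "\<Phi> (dyad outer x) d"
  have vi: "?vi \<in> l2" and vo: "?vo \<in> l2"
    unfolding d_def by (intro bop_l2[OF Phi_bop] dyad_uroe inner outer delta_l2)+
  have "\<Phi> T d = \<Phi> (op_add (dyad inner x) (dyad outer x)) d"
    unfolding d_def Phi_apply_delta_phi[OF T] op_add_dyad
    by (rule arg_cong[where f="\<lambda>u. \<Phi> (dyad u x) (delta (phi x))"]) (auto simp: inner_def outer_def w_def)
  also have "\<dots> = (\<lambda>y. ?vi y + ?vo y)"
    by (simp only: Phi_add[OF dyad_uroe[OF inner] dyad_uroe[OF outer]]) (simp add: op_add_def)
  finally have "c (\<Phi> T d) = (\<lambda>y. c ?vi y + c ?vo y)"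
    by (simp add: bop_add[OF corner_bop[OF c(1)] vi vo])
  moreover have "c ?vi z = 0"
  proof -
    obtain N :: nat where "\<And>y::'a. finite (cball y \<delta>)" using unif_locally_finiteE[OF ulf] by blast
    thus ?thesis unfolding d_def using far
      by (intro corner_Phi_dyad_far_zero[OF Z c inner, where B=B]) (auto simp: inner_def B_def)
  qed
  moreover have "cmod (c ?vo z) \<le> op_norm c * op_norm (op_diff T S)"
  proof -
    have "cmod (c ?vo z) \<le> op_norm c * l2norm outer"
      using norm_apply_le_op_norm[OF corner_bop[OF c(1)] vo] by (simp add: d_def l2norm_Phi_dyad[OF outer])
    also have "\<dots> \<le> op_norm c * op_norm (op_diff T S)"
    proof (rule mult_left_mono[OF _ op_norm_nonneg[OF corner_bop[OF c(1)]]])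
      show "l2norm outer \<le> op_norm (op_diff T S)"
        using l2norm_outside_cball_le[OF uroe_bop[OF T] S k', of x] unfolding outer_def B_def w_def .
    qed
    finally show ?thesis .
  qed
  ultimately show ?thesis by (simp add: d_def)
qed

lemma corner_Phi_sum_far_le:
  fixes l :: nat
  assumes ulf: "unif_locally_finite TYPE('a)" and Z: "Z = range phi"
    and ca: "\<forall>i<l. c i \<in> corner Z \<and> propg_le (c i) k \<and> T i \<in> uroe" and \<eta>: "\<eta> > 0"
  obtains \<delta> where "\<delta> > 0" "\<And>x z. (\<And>w. w \<in> phi ` cball x \<delta> \<Longrightarrow> k < dist z w) \<Longrightarrow>
    cmod (\<Sum>i<l. c i (\<Phi> (T i) (delta (phi x))) z) \<le> (\<Sum>i<l. op_norm (c i)) * \<eta>"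
proof -
  have "\<exists>S k'. bop S \<and> propg_le S k' \<and> op_norm (op_diff (T i) S) < \<eta>" if "i < l" for i
    using ca that \<eta> unfolding uroe_def by blast
  then obtain S k' where S: "\<And>i. i < l \<Longrightarrow> bop (S i) \<and> propg_le (S i) (k' i) \<and> op_norm (op_diff (T i) (S i)) < \<eta>"
    by metis
  define \<delta> where "\<delta> = 1 + (\<Sum>i<l. \<bar>k' i\<bar>)"
  have k'\<delta>: "k' i < \<delta>" if "i < l" for i
  proof -
    have "\<bar>k' i\<bar> \<le> (\<Sum>i<l. \<bar>k' i\<bar>)" using that by (intro member_le_sum) auto
    thus ?thesis unfolding \<delta>_def by linarith
  qed
  show ?thesis
  proof (rule that)
    show "\<delta> > 0" unfolding \<delta>_def by (simp add: add_pos_nonneg sum_nonneg)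
    fix x z assume far: "\<And>w. w \<in> phi ` cball x \<delta> \<Longrightarrow> k < dist z w"
    have entry_le: "cmod (c i (\<Phi> (T i) (delta (phi x))) z) \<le> op_norm (c i) * \<eta>" if i: "i < l" for i
    proof -
      have "cmod (c i (\<Phi> (T i) (delta (phi x))) z) \<le> op_norm (c i) * op_norm (op_diff (T i) (S i))"
        using ca S k'\<delta> i by (intro corner_Phi_entry_far_le[OF ulf Z _ _ _ _ _ _ far]) auto
      also have "\<dots> \<le> op_norm (c i) * \<eta>"
        using ca S i by (intro mult_left_mono op_norm_nonneg corner_bop) (auto intro: less_imp_le)
      finally show ?thesis .
    qed
    have "cmod (\<Sum>i<l. c i (\<Phi> (T i) (delta (phi x))) z) \<le> (\<Sum>i<l. cmod (c i (\<Phi> (T i) (delta (phi x))) z))"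
      by (rule norm_sum)
    also have "\<dots> \<le> (\<Sum>i<l. op_norm (c i) * \<eta>)" by (rule sum_mono) (simp add: entry_le)
    finally show "cmod (\<Sum>i<l. c i (\<Phi> (T i) (delta (phi x))) z) \<le> (\<Sum>i<l. op_norm (c i)) * \<eta>"
      by (simp add: sum_distrib_right)
  qed
qed

lemma band_approx_quotient_radius:
  fixes l :: nat
  assumes ulfX: "unif_locally_finite TYPE('a)" and ulfY: "unif_locally_finite TYPE('b)"
    and \<epsilon>: "\<epsilon> < 1" and Z: "Z = range phi"
    and ac: "\<forall>i<l. c i \<in> corner Z \<and> propg_le (c i) k \<and> T i \<in> uroe"
    and approx: "op_norm (op_diff (chi Z \<circ> band r \<circ> chi Z) (op_sum (\<lambda>i. c i \<circ> \<Phi> (T i)) {..<l})) \<le> \<epsilon>"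
  shows "\<exists>\<delta>>0. \<forall>x. cball (phi x) r \<inter> Z \<subseteq> {z\<in>Z. \<exists>w\<in>phi ` cball x \<delta>. dist z w \<le> k}"
proof -
  define b where "b = chi Z \<circ> band r \<circ> chi Z"
  define D where "D = op_diff b (op_sum (\<lambda>i. c i \<circ> \<Phi> (T i)) {..<l})"
  have "bop (c i \<circ> \<Phi> (T i))" if "i < l" for i
    using ac that by (metis bop_comp corner_bop Phi_bop)
  moreover have "bop b"
    unfolding b_def by (intro bop_comp band_bop[OF ulfY] uroe_bop[OF chi_uroe])
  ultimately have D: "bop D" unfolding D_def by (auto intro: bop_op_diff bop_op_sum)
  define M where "M = 1 + (\<Sum>i<l. op_norm (c i))"
  have "0 \<le> op_norm (c i)" if "i < l" for i using ac that op_norm_nonneg corner_bop by blast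
  hence "0 \<le> (\<Sum>i<l. op_norm (c i))" by (intro sum_nonneg) auto
  hence M: "M \<ge> 1" by (simp add: M_def)
  define \<eta> where "\<eta> = (1 - \<epsilon>) / (2 * M)"
  have \<eta>: "\<eta> > 0" using \<epsilon> M by (simp add: \<eta>_def)
  have room: "\<epsilon> + (M - 1) * \<eta> < 1"
  proof -
    have "(M - 1) * \<eta> \<le> M * \<eta>" using \<eta> by simp
    also have "M * \<eta> = (1 - \<epsilon>) / 2" using M by (simp add: \<eta>_def)
    finally show ?thesis using \<epsilon> by argo
  qed
  obtain \<delta> where \<delta>: "\<delta> > 0" and small: "\<And>x z. (\<And>w. w \<in> phi ` cball x \<delta> \<Longrightarrow> k < dist z w) \<Longrightarrow>
      cmod (\<Sum>i<l. c i (\<Phi> (T i) (delta (phi x))) z) \<le> (M - 1) * \<eta>"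
    using corner_Phi_sum_far_le[OF ulfX Z ac \<eta>] by (auto simp: M_def)
  have "z \<in> {z\<in>Z. \<exists>w\<in>phi ` cball x \<delta>. dist z w \<le> k}" if z: "z \<in> cball (phi x) r \<inter> Z" for x z
  proof (rule ccontr)
    let ?s = "\<Sum>i<l. c i (\<Phi> (T i) (delta (phi x))) z"
    assume "z \<notin> {z\<in>Z. \<exists>w\<in>phi ` cball x \<delta>. dist z w \<le> k}"
    hence sum: "cmod ?s \<le> (M - 1) * \<eta>" using small[of x z] z by (auto simp: not_le)
    have diff: "cmod (D (delta (phi x)) z) \<le> \<epsilon>"
      using norm_apply_le_op_norm[OF D delta_l2, of "phi x" z] approx by (simp add: D_def b_def)
    have "phi x \<in> Z" "z \<in> Z" using Z z by auto
    hence "b (delta (phi x)) z = 1"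
      using z unfolding b_def by (simp add: corner_band_delta[OF ulfY] dist_commute)
    hence "1 = cmod (D (delta (phi x)) z + ?s)" by (simp add: D_def op_diff_def op_sum_def)
    also have "\<dots> \<le> cmod (D (delta (phi x)) z) + cmod ?s" by (rule norm_triangle_ineq)
    also have "\<dots> < 1" using diff sum room by linarith
    finally show False by simp
  qed
  thus ?thesis using \<delta> by blast
qed

lemma phi_coarse_quotient_condition:
  assumes ulfX: "unif_locally_finite TYPE('a)" and ulfY: "unif_locally_finite TYPE('b)"
    and \<epsilon>: "\<epsilon> < 1" and cob: "almost_cobounded \<epsilon> (\<Phi> ` uroe) (corner Z)" and Z: "Z = range phi"
  shows "\<exists>K>0. \<forall>r>0. \<exists>\<delta>>0. \<forall>x. cball (phi x) r \<inter> Z \<subseteq> {z\<in>Z. \<exists>w\<in>phi ` cball x \<delta>. dist z w \<le> K}"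
proof -
  obtain k where k: "k > 0" and kc: "\<forall>b\<in>corner Z. \<exists>(l::nat) a c.
      (\<forall>i<l. a i \<in> \<Phi> ` uroe \<and> c i \<in> corner Z \<and> propg_le (c i) k)
      \<and> op_norm (op_diff b (op_sum (\<lambda>i. c i \<circ> a i) {..<l})) \<le> \<epsilon>"
    using cob unfolding almost_cobounded_def by blast
  have "\<exists>\<delta>>0. \<forall>x. cball (phi x) r \<inter> Z \<subseteq> {z\<in>Z. \<exists>w\<in>phi ` cball x \<delta>. dist z w \<le> k}" for r
  proof -
    have "chi Z \<circ> band r \<circ> chi Z \<in> corner Z" unfolding corner_def using band_uroe[OF ulfY] by blast
    then obtain l :: nat and a c where ac: "\<forall>i<l. a i \<in> \<Phi> ` uroe \<and> c i \<in> corner Z \<and> propg_le (c i) k"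
      and approx: "op_norm (op_diff (chi Z \<circ> band r \<circ> chi Z) (op_sum (\<lambda>i. c i \<circ> a i) {..<l})) \<le> \<epsilon>"
      using kc by blast
    have "\<exists>t. t \<in> uroe \<and> a i = \<Phi> t" if "i < l" for i using ac that by blast
    then obtain T where T: "\<And>i. i < l \<Longrightarrow> T i \<in> uroe \<and> a i = \<Phi> (T i)" by metis
    have "op_sum (\<lambda>i. c i \<circ> a i) {..<l} = op_sum (\<lambda>i. c i \<circ> \<Phi> (T i)) {..<l}"
      using T by (simp add: op_sum_def)
    thus ?thesis using ac T approx by (intro band_approx_quotient_radius[OF ulfX ulfY \<epsilon> Z]) auto
  qed
  thus ?thesis using k by blast
qed

end

theorem lemma4p5:
  fixes \<Phi> :: "('a::metric_space) op \<Rightarrow> ('b::metric_space) op"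
    and Z :: "'b set" and \<epsilon> :: real
  assumes "unif_locally_finite TYPE('a)" and "unif_locally_finite TYPE('b)"
    and "embedding \<Phi>"
    and "\<Phi> ` linf \<subseteq> linf"
    and "\<forall>x::'a. rank_one (\<Phi> (exy x x))"
    and "sot_sum (\<lambda>x::'a. \<Phi> (exy x x)) (chi Z)"
    and "0 < \<epsilon>" and "\<epsilon> < 1"
    and "almost_cobounded \<epsilon> (\<Phi> ` uroe) {chi Z \<circ> b \<circ> chi Z | b. b \<in> uroe}"
  shows "\<exists>f::'a \<Rightarrow> 'b. bij_betw f UNIV Z \<and> coarse_quotient_on f Z"
proof -
  interpret diag_rank_one_embedding \<Phi> using assms(3,4,5) by unfold_locales
  have Z: "Z = range phi" by (rule Z_eq_range_phi[OF assms(6)])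
  have "bij_betw phi UNIV Z" using phi_inj Z by (simp add: bij_betw_def)
  moreover have "coarse_quotient_on phi Z"
    unfolding coarse_quotient_on_def
    using Z coarse_map_phi[OF assms(1)]
      phi_coarse_quotient_condition[OF assms(1,2,8) assms(9)[folded corner_def] Z]
    by blast
  ultimately show ?thesis by blast
qed

end
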